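(* Let $M$ be a finite $\mathcal J$-above semigroup. Define $H:\mathrm{Rh}(M^I)\times\mathrm{Rh}(M^I)\to\overline{\mathbb N}$ by $H(\sigma,\sigma)=2\sup h_{\mathcal J}+2$ (equal to $\omega$ if $h_{\mathcal J}$ is unbounded), $H(\sigma,\tau)=2h_{\mathcal J}(\sigma\wedge_{\mathcal L}\tau)+1$ if $\sigma\neq\tau$ and $(\sigma,\tau)\in V(M^I)$, and $H(\sigma,\tau)=2h_{\mathcal J}(\sigma\wedge_{\mathcal L}\tau)$ otherwise. Then $H$ is a strict length function for $\mathrm{Rh}(M^I)$. Consequently, if $M$ is a $Y$-semigroup, the restriction $H_Y$ of $H$ to $\mathrm{Rh}_Y(M^I)\times\mathrm{Rh}_Y(M^I)$ is a strict length function for $\mathrm{Rh}_Y(M^I)$, and $H_Y=D_\chi$ for some strongly faithful elliptic $\mathrm{Rh}_Y(M^I)$-tree $\chi$, unique up to isomorphism.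
   Context: $M^I$: $M$ with new identity $I$. Finite $\mathcal J$-above: $\{y:y\ge_{\mathcal J}x\}$ finite for all $x$. $h_{\mathcal J}$ is the $\mathcal J$-height function of $M^I$: $h_{\mathcal J}(m)$ is the largest $k$ such that there is a chain $m=m_0<_{\mathcal J}m_1<_{\mathcal J}\cdots<_{\mathcal J}m_k$ in $M^I$ (so $h_{\mathcal J}(I)=0$). $\mathrm{Rh}(M^I)$ is the Rhodes expansion (finite chains $(m_k<_{\mathcal L}\cdots<_{\mathcal L}m_0=I)$, product $\sigma\tau=\mathrm{lm}(m_kn\le_{\mathcal L}\cdots\le_{\mathcal L}m_1n\le_{\mathcal L}\tau)$ with $n$ the leftmost term of $\tau$, $\mathrm{lm}$ keeping the leftmost term of each $\mathcal L$-block). A $Y$-semigroup is a semigroup $M$ with a surjective morphism $Y^+\to M$; $\mathrm{Rh}_Y(M^I)$ is the submonoid of $\mathrm{Rh}(M^I)$ generated by the chains $(y<_{\mathcal L}I)$, $y\in Y$. $\sigma\wedge_{\mathcal L}\tau=m_r$, $r$ maximal with $m_j=m'_j$ ($j<r$) and $m_r\,\mathcal L\,m'_r$. $V(M^I)$: pairs $(\sigma,\tau)$ such that for all $\rho$, $(\rho\sigma\wedge_{\mathcal L}\rho\tau)\,\mathcal L\,(\sigma\wedge_{\mathcal L}\tau)$ implies $(\rho\sigma\wedge_{\mathcal L}\rho\tau)\,\mathcal R\,(\rho\tau\wedge_{\mathcal L}\rho\sigma)$. Length function: $D:S\times S\to\mathbb N\cup\{\omega\}$ with symmetry, $D(m',m'')\le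 D(m,m)$, $D(m',m'')\le D(m'm,m''m)$, $D(m,m'')\ge\min\{D(m,m'),D(m',m'')\}$; strict if $D(m',m'')=D(m,m)\Rightarrow m'=m''$. Elliptic $S$-tree $\chi=(r_0,T,\alpha,\theta)$: uniform rooted tree, maximal ray $\alpha$, elliptic (depth-preserving, distance-non-increasing) action with $\mathrm{Vert}(T)=\bigcup_i\alpha_iS$; strongly faithful if $\alpha s=\alpha s'\Rightarrow s=s'$; $D_\chi(s,s')=|\alpha s\wedge\alpha s'|$. *)

theory Defs
  imports Main "HOL-Library.Extended_Nat"
begin

section \<open>The monoid M^I (M a semigroup given by a type, I = None)\<close>

fun mI :: "'a::semigroup_mult option \<Rightarrow> 'a option \<Rightarrow> 'a option" where
  "mI None y = y"
| "mI (Some x) None = Some x"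
| "mI (Some x) (Some y) = Some (x * y)"

definition leR :: "'a::semigroup_mult option \<Rightarrow> 'a option \<Rightarrow> bool" where
  "leR x y \<longleftrightarrow> (\<exists>u. x = mI y u)"
definition leL :: "'a::semigroup_mult option \<Rightarrow> 'a option \<Rightarrow> bool" where
  "leL x y \<longleftrightarrow> (\<exists>u. x = mI u y)"
definition leJ :: "'a::semigroup_mult option \<Rightarrow> 'a option \<Rightarrow> bool" where
  "leJ x y \<longleftrightarrow> (\<exists>u v. x = mI (mI u y) v)"
definition eqR :: "'a::semigroup_mult option \<Rightarrow> 'a option \<Rightarrow> bool" where
  "eqR x y \<longleftrightarrow> leR x y \<and> leR y x"
definition eqL :: "'a::semigroup_mult option \<Rightarrow> 'a option \<Rightarrow> bool" where
  "eqL x y \<longleftrightarrow> leL x y \<and> leL y x"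
definition ltL :: "'a::semigroup_mult option \<Rightarrow> 'a option \<Rightarrow> bool" where
  "ltL x y \<longleftrightarrow> leL x y \<and> \<not> leL y x"
definition ltJ :: "'a::semigroup_mult option \<Rightarrow> 'a option \<Rightarrow> bool" where
  "ltJ x y \<longleftrightarrow> leJ x y \<and> \<not> leJ y x"

definition J_above_finite :: "'a::semigroup_mult itself \<Rightarrow> bool" where
  "J_above_finite _ \<longleftrightarrow> (\<forall>x::'a. finite {y::'a. leJ (Some x) (Some y)})"

definition hJ :: "'a::semigroup_mult option \<Rightarrow> nat" where
  "hJ m = (GREATEST k. \<exists>c::nat \<Rightarrow> 'a option. c 0 = m \<and> (\<forall>i<k. ltJ (c i) (c (Suc i))))"

text \<open>A chain (m_k <_L ... <_L m_1 <_L m_0 = I) is the list [m_k, ..., m_1, m_0];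
  its leftmost term is the head of the list.\<close>
definition rhodes :: "'a::semigroup_mult option list set" where
  "rhodes = {xs. xs \<noteq> [] \<and> last xs = None \<and> sorted_wrt ltL xs}"

fun lm :: "'a::semigroup_mult option list \<Rightarrow> 'a option list" where
  "lm [] = []"
| "lm [x] = [x]"
| "lm (x # y # zs) = (if eqL x y then lm (x # zs) else x # lm (y # zs))"

definition rh_mult :: "'a::semigroup_mult option list \<Rightarrow> 'a option list \<Rightarrow> 'a option list" where
  "rh_mult \<sigma> \<tau> = lm (map (\<lambda>m. mI m (hd \<tau>)) (butlast \<sigma>) @ \<tau>)"

text \<open>Y-semigroups: phi gives the images of the letters; the induced morphism Y^+ -> M.\<close>
fun evalY :: "('y \<Rightarrow> 'a::semigroup_mult) \<Rightarrow> 'y list \<Rightarrow> 'a" where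
  "evalY \<phi> [] = undefined"
| "evalY \<phi> [y] = \<phi> y"
| "evalY \<phi> (y # z # ys) = \<phi> y * evalY \<phi> (z # ys)"

definition Y_semigroup :: "('y \<Rightarrow> 'a::semigroup_mult) \<Rightarrow> bool" where
  "Y_semigroup \<phi> \<longleftrightarrow> (\<forall>m::'a. \<exists>w. w \<noteq> [] \<and> evalY \<phi> w = m)"

inductive_set RhY :: "('y \<Rightarrow> 'a::semigroup_mult) \<Rightarrow> 'a option list set" for \<phi> where
  unit: "[None] \<in> RhY \<phi>"
| gen: "[Some (\<phi> y), None] \<in> RhY \<phi>"
| mult: "\<sigma> \<in> RhY \<phi> \<Longrightarrow> \<tau> \<in> RhY \<phi> \<Longrightarrow> rh_mult \<sigma> \<tau> \<in> RhY \<phi>"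

text \<open>sigma \<and>_L tau = m_r (indices counted from m_0 = I, i.e. on the reversed list).\<close>
definition wedgeL :: "'a::semigroup_mult option list \<Rightarrow> 'a option list \<Rightarrow> 'a option" where
  "wedgeL \<sigma> \<tau> = rev \<sigma> ! (GREATEST r. r < length \<sigma> \<and> r < length \<tau> \<and>
      (\<forall>j<r. rev \<sigma> ! j = rev \<tau> ! j) \<and> eqL (rev \<sigma> ! r) (rev \<tau> ! r))"

definition inV :: "'a::semigroup_mult option list \<Rightarrow> 'a option list \<Rightarrow> bool" where
  "inV \<sigma> \<tau> \<longleftrightarrow> (\<forall>\<rho>\<in>rhodes.
      eqL (wedgeL (rh_mult \<rho> \<sigma>) (rh_mult \<rho> \<tau>)) (wedgeL \<sigma> \<tau>) \<longrightarrow>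
      eqR (wedgeL (rh_mult \<rho> \<sigma>) (rh_mult \<rho> \<tau>)) (wedgeL (rh_mult \<rho> \<tau>) (rh_mult \<rho> \<sigma>)))"

definition VMI :: "('a::semigroup_mult option list \<times> 'a option list) set" where
  "VMI = {(\<sigma>, \<tau>). \<sigma> \<in> rhodes \<and> \<tau> \<in> rhodes \<and> inV \<sigma> \<tau>}"

definition Hfun :: "'a::semigroup_mult option list \<Rightarrow> 'a option list \<Rightarrow> enat" where
  "Hfun \<sigma> \<tau> = (if \<sigma> = \<tau> then 2 * (SUP m::'a option. enat (hJ m)) + 2
     else if (\<sigma>, \<tau>) \<in> VMI then enat (2 * hJ (wedgeL \<sigma> \<tau>) + 1)
     else enat (2 * hJ (wedgeL \<sigma> \<tau>)))"

definition length_function :: "'s set \<Rightarrow> ('s \<Rightarrow> 's \<Rightarrow> 's) \<Rightarrow> ('s \<Rightarrow> 's \<Rightarrow> enat) \<Rightarrow> bool" where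
  "length_function S f D \<longleftrightarrow> (\<forall>m\<in>S. \<forall>m'\<in>S. \<forall>m''\<in>S.
      D m m' = D m' m \<and> D m' m'' \<le> D m m \<and> D m' m'' \<le> D (f m' m) (f m'' m) \<and>
      min (D m m') (D m' m'') \<le> D m m'')"

definition strict_length_function :: "'s set \<Rightarrow> ('s \<Rightarrow> 's \<Rightarrow> 's) \<Rightarrow> ('s \<Rightarrow> 's \<Rightarrow> enat) \<Rightarrow> bool" where
  "strict_length_function S f D \<longleftrightarrow> length_function S f D \<and>
     (\<forall>m\<in>S. \<forall>m'\<in>S. \<forall>m''\<in>S. D m' m'' = D m m \<longrightarrow> m' = m'')"

text \<open>A rooted tree is given by its vertex set, root and parent map (par is only meaningful
  off the root); the ray alpha is (alpha 0, ..., alpha l) with l \<in> nat \<union> {omega};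
  act is a right action of S.\<close>
record ('v, 's) stree =
  Vt :: "'v set"
  rt :: 'v
  par :: "'v \<Rightarrow> 'v"
  ray :: "nat \<Rightarrow> 'v"
  rlen :: enat
  act :: "'v \<Rightarrow> 's \<Rightarrow> 'v"

definition rooted_tree :: "('v, 's) stree \<Rightarrow> bool" where
  "rooted_tree T \<longleftrightarrow> rt T \<in> Vt T \<and> (\<forall>v\<in>Vt T. v \<noteq> rt T \<longrightarrow> par T v \<in> Vt T) \<and>
     (\<forall>v\<in>Vt T. \<exists>n. (par T ^^ n) v = rt T)"

definition depth :: "('v, 's) stree \<Rightarrow> 'v \<Rightarrow> nat" where
  "depth T v = (LEAST n. (par T ^^ n) v = rt T)"

definition tdist :: "('v, 's) stree \<Rightarrow> 'v \<Rightarrow> 'v \<Rightarrow> nat" where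
  "tdist T v w = (LEAST n. \<exists>k l. k + l = n \<and> k \<le> depth T v \<and> l \<le> depth T w \<and>
      (par T ^^ k) v = (par T ^^ l) w)"

definition is_ray :: "('v, 's) stree \<Rightarrow> (nat \<Rightarrow> 'v) \<Rightarrow> enat \<Rightarrow> bool" where
  "is_ray T \<beta> l \<longleftrightarrow> \<beta> 0 = rt T \<and> (\<forall>i. enat i \<le> l \<longrightarrow> \<beta> i \<in> Vt T) \<and>
     (\<forall>i. enat (Suc i) \<le> l \<longrightarrow> \<beta> (Suc i) \<noteq> rt T \<and> par T (\<beta> (Suc i)) = \<beta> i)"

definition is_max_ray :: "('v, 's) stree \<Rightarrow> (nat \<Rightarrow> 'v) \<Rightarrow> enat \<Rightarrow> bool" where
  "is_max_ray T \<beta> l \<longleftrightarrow> is_ray T \<beta> l \<and>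
     (\<forall>n. l = enat n \<longrightarrow> \<not> (\<exists>w\<in>Vt T. w \<noteq> rt T \<and> par T w = \<beta> n))"

definition uniform_tree :: "('v, 's) stree \<Rightarrow> bool" where
  "uniform_tree T \<longleftrightarrow> (\<forall>\<beta>1 l1 \<beta>2 l2. is_max_ray T \<beta>1 l1 \<and> is_max_ray T \<beta>2 l2 \<longrightarrow> l1 = l2)"

definition elliptic_action :: "'s set \<Rightarrow> ('s \<Rightarrow> 's \<Rightarrow> 's) \<Rightarrow> ('v, 's) stree \<Rightarrow> bool" where
  "elliptic_action S f T \<longleftrightarrow>
     (\<forall>v\<in>Vt T. \<forall>s\<in>S. act T v s \<in> Vt T \<and> depth T (act T v s) = depth T v) \<and>
     (\<forall>v\<in>Vt T. \<forall>w\<in>Vt T. \<forall>s\<in>S. tdist T (act T v s) (act T w s) \<le> tdist T v w) \<and>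
     (\<forall>v\<in>Vt T. \<forall>s\<in>S. \<forall>t\<in>S. act T (act T v s) t = act T v (f s t))"

definition elliptic_tree :: "'s set \<Rightarrow> ('s \<Rightarrow> 's \<Rightarrow> 's) \<Rightarrow> ('v, 's) stree \<Rightarrow> bool" where
  "elliptic_tree S f T \<longleftrightarrow> rooted_tree T \<and> uniform_tree T \<and> is_max_ray T (ray T) (rlen T) \<and>
     elliptic_action S f T \<and>
     Vt T = {act T (ray T i) s | i s. enat i \<le> rlen T \<and> s \<in> S}"

definition strongly_faithful :: "'s set \<Rightarrow> ('v, 's) stree \<Rightarrow> bool" where
  "strongly_faithful S T \<longleftrightarrow> (\<forall>s\<in>S. \<forall>s'\<in>S.
     (\<forall>i. enat i \<le> rlen T \<longrightarrow> act T (ray T i) s = act T (ray T i) s') \<longrightarrow> s = s')"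

text \<open>D_chi(s,s') = |alpha s \<and> alpha s'|, the length of the common initial segment.\<close>
definition Dchi :: "('v, 's) stree \<Rightarrow> 's \<Rightarrow> 's \<Rightarrow> enat" where
  "Dchi T s s' = Sup {enat i | i. enat i \<le> rlen T \<and> act T (ray T i) s = act T (ray T i) s'}"

definition stree_iso :: "'s set \<Rightarrow> ('v, 's) stree \<Rightarrow> ('w, 's) stree \<Rightarrow> bool" where
  "stree_iso S T1 T2 \<longleftrightarrow> (\<exists>g. bij_betw g (Vt T1) (Vt T2) \<and> g (rt T1) = rt T2 \<and>
     (\<forall>v\<in>Vt T1. v \<noteq> rt T1 \<longrightarrow> g (par T1 v) = par T2 (g v)) \<and>
     rlen T1 = rlen T2 \<and> (\<forall>i. enat i \<le> rlen T1 \<longrightarrow> g (ray T1 i) = ray T2 i) \<and>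
     (\<forall>v\<in>Vt T1. \<forall>s\<in>S. g (act T1 v s) = act T2 (g v) s))"

end

theory Submission
  imports Defs
begin

(*
  Stability (y <=_J u y implies y <=_L u y, and dually) is
     proved by a pigeonhole argument on powers, since only finitely many elements lie
     J-above a given one.  Hence the J-height h is finite, strictly decreasing along <_J
     and constant on L-classes.
  2. The Rhodes product is expressed through lfirst, which keeps the first element of each
     L-class of a list; this gives closure, associativity and units, and shows that left
     multiplication only replaces the head of a chain by an L-equivalent element.
  3. Lower bounds for H are described by witnesses: k <= H(sigma, tau) iff some position r
     where the chains agree has k <= 2 h + 1, the odd value requiring that the entries at r
     stay R-equivalent under all left multiplications.  Witnesses compose (ultrametric
     inequality) and survive right multiplication (by stability), so H is a strict length
     function.
  4. For a strict length function D on an arbitrary monoid S, the tree of D-balls is a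
     strongly faithful elliptic S-tree realising D, and any two elliptic S-trees realising
     D are isomorphic.
  5. Rh_Y(M^I) is a submonoid of Rh(M^I), so everything restricts to it.
*)

lemma mI_assoc: "mI (mI a b) c = mI a (mI b c)"
  by (cases a; cases b; cases c) (simp_all add: mult.assoc)

lemma mI_None_right [simp]: "mI a None = a"
  by (cases a) simp_all

lemma mI_None_iff: "mI a b = None \<longleftrightarrow> a = None \<and> b = None"
  by (cases a; cases b) auto

lemma leL_refl [simp]: "leL x x" unfolding leL_def by (metis mI.simps(1))
lemma leR_refl [simp]: "leR x x" unfolding leR_def by (metis mI_None_right)
lemma leJ_refl [simp]: "leJ x x" unfolding leJ_def by (metis mI.simps(1) mI_None_right)
lemma leL_trans: "leL x y \<Longrightarrow> leL y z \<Longrightarrow> leL x z" unfolding leL_def by (metis mI_assoc)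
lemma leR_trans: "leR x y \<Longrightarrow> leR y z \<Longrightarrow> leR x z" unfolding leR_def by (metis mI_assoc)
lemma leJ_trans: "leJ x y \<Longrightarrow> leJ y z \<Longrightarrow> leJ x z" unfolding leJ_def by (metis mI_assoc)
lemma leL_leJ: "leL x y \<Longrightarrow> leJ x y" unfolding leL_def leJ_def by (metis mI_None_right)
lemma leR_leJ: "leR x y \<Longrightarrow> leJ x y" unfolding leR_def leJ_def by (metis mI.simps(1))
lemma leL_self: "leL (mI u x) x" unfolding leL_def by blast
lemma leR_self: "leR (mI x u) x" unfolding leR_def by blast
lemma leJ_self_right: "leJ (mI x u) x" by (simp add: leR_leJ leR_self)
lemma leL_mult_right: "leL x y \<Longrightarrow> leL (mI x n) (mI y n)" unfolding leL_def by (metis mI_assoc)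
lemma leL_top: "leL x None" unfolding leL_def by (metis mI_None_right)
lemma leL_None: "leL None x \<Longrightarrow> x = None" unfolding leL_def by (metis mI_None_iff)
lemma leJ_None: "leJ None x \<Longrightarrow> x = None" unfolding leJ_def by (metis mI_None_iff)

lemma eqL_refl [simp]: "eqL x x" unfolding eqL_def by simp
lemma eqR_refl [simp]: "eqR x x" unfolding eqR_def by simp
lemma eqL_sym: "eqL x y \<Longrightarrow> eqL y x" unfolding eqL_def by simp
lemma eqR_sym: "eqR x y \<Longrightarrow> eqR y x" unfolding eqR_def by simp
lemma eqL_trans: "eqL x y \<Longrightarrow> eqL y z \<Longrightarrow> eqL x z" unfolding eqL_def by (meson leL_trans)
lemma eqR_trans: "eqR x y \<Longrightarrow> eqR y z \<Longrightarrow> eqR x z" unfolding eqR_def by (meson leR_trans)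
lemma eqL_mult_right: "eqL x y \<Longrightarrow> eqL (mI x n) (mI y n)" unfolding eqL_def by (simp add: leL_mult_right)
lemma eqL_None: "eqL x None \<longleftrightarrow> x = None" unfolding eqL_def using leL_None leL_top by blast
lemma ltL_leL: "ltL x y \<Longrightarrow> leL x y" unfolding ltL_def by simp
lemma ltJ_trans: "ltJ x y \<Longrightarrow> ltJ y z \<Longrightarrow> ltJ x z" unfolding ltJ_def by (meson leJ_trans)
lemma ltJ_irrefl: "\<not> ltJ x x" unfolding ltJ_def by simp


section \<open>Stability of finite $\mathcal J$-above semigroups\<close>

fun opow :: "'a::semigroup_mult option \<Rightarrow> nat \<Rightarrow> 'a option" where
  "opow c 0 = None"
| "opow c (Suc k) = mI c (opow c k)"

lemma opow_add: "opow c (i + j) = mI (opow c i) (opow c j)"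
  by (induction i) (simp_all add: mI_assoc)

lemma opow_Suc_right: "opow c (Suc k) = mI (opow c k) c"
  using opow_add[of c k 1] by simp

lemma finite_J_above:
  assumes fin: "J_above_finite TYPE('a::semigroup_mult)"
  shows "finite {z. leJ (y::'a option) z}"
proof (cases y)
  case None
  then have "{z. leJ y z} = {None}" using leJ_None by auto
  then show ?thesis by simp
next
  case (Some x)
  have "{z. leJ y z} \<subseteq> insert None (Some ` {w. leJ (Some x) (Some w)})"
  proof
    fix z assume "z \<in> {z. leJ y z}"
    then show "z \<in> insert None (Some ` {w. leJ (Some x) (Some w)})"
      using Some by (cases z) auto
  qed
  moreover have "finite {w. leJ (Some x) (Some w)}" using fin unfolding J_above_finite_def by simp
  ultimately show ?thesis by (meson finite_subset finite_insert finite_imageI)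
qed

lemma finite_range_repeats:
  assumes "finite A" "\<And>k. g k \<in> A"
  obtains i j :: nat where "i < j" "g i = g j"
proof -
  have "finite (range g)" using assms by (meson finite_subset image_subsetI)
  then have "\<not> inj g" using infinite_UNIV_nat finite_imageD by blast
  then show ?thesis using that unfolding inj_def by (metis linorder_neqE_nat)
qed

lemma sandwich_powers: "y = mI (mI c y) b \<Longrightarrow> y = mI (mI (opow c k) y) (opow b k)"
proof (induction k)
  case (Suc k)
  have "y = mI (mI (opow c k) (mI (mI c y) b)) (opow b k)" using Suc by simp
  also have "\<dots> = mI (mI (opow c (Suc k)) y) (opow b (Suc k))"
    unfolding opow_Suc_right[of c k] opow.simps(2)[of b k] by (simp only: mI_assoc)
  finally show ?case .
qed simp

text \<open>The elements
  \<open>c\<^sup>k y\<close> all lie $\mathcal J$-above \<open>y\<close>, so two of them coincide.\<close>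

lemma sandwich_return:
  assumes fin: "J_above_finite TYPE('a::semigroup_mult)" and y: "(y::'a option) = mI (mI c y) b"
  shows "\<exists>d>0. y = mI (opow c d) y" and "\<exists>d>0. y = mI y (opow b d)"
proof -
  have sw: "y = mI (mI (opow c k) y) (opow b k)" for k using sandwich_powers[OF y] .
  have A: "finite {z. leJ y z}" by (rule finite_J_above[OF fin])
  have "leJ y (mI (opow c k) y)" for k using sw[of k] leR_self leR_leJ by metis
  then obtain i j where ij: "i < j" "mI (opow c i) y = mI (opow c j) y"
    using finite_range_repeats[OF A, of "\<lambda>k. mI (opow c k) y"] by blast
  have "y = mI (mI (opow c j) y) (opow b i)" using sw[of i] ij(2) by simp
  also have "\<dots> = mI (opow c (j - i)) (mI (mI (opow c i) y) (opow b i))"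
    using opow_add[of c "j - i" i] ij(1) by (simp add: mI_assoc)
  also have "\<dots> = mI (opow c (j - i)) y" using sw[of i] by simp
  finally show "\<exists>d>0. y = mI (opow c d) y" using ij(1) by (intro exI[of _ "j - i"]) auto
  have "leJ y (mI y (opow b k))" for k using sw[of k] leL_self leL_leJ by (metis mI_assoc)
  then obtain i j where ij: "i < j" "mI y (opow b i) = mI y (opow b j)"
    using finite_range_repeats[OF A, of "\<lambda>k. mI y (opow b k)"] by blast
  have "y = mI (opow c i) (mI y (opow b j))" using sw[of i] ij(2) by (simp add: mI_assoc)
  also have "\<dots> = mI (mI (mI (opow c i) y) (opow b i)) (opow b (j - i))"
    using opow_add[of b i "j - i"] ij(1) by (simp add: mI_assoc)
  also have "\<dots> = mI y (opow b (j - i))" using sw[of i] by simp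
  finally show "\<exists>d>0. y = mI y (opow b d)" using ij(1) by (intro exI[of _ "j - i"]) auto
qed

lemma stable_L:
  assumes fin: "J_above_finite TYPE('a::semigroup_mult)" and J: "leJ (y::'a option) (mI u y)"
  shows "leL y (mI u y)"
proof -
  obtain a b where "y = mI (mI a (mI u y)) b" using J unfolding leJ_def by blast
  then have "y = mI (mI (mI a u) y) b" by (simp add: mI_assoc)
  then obtain d where "d > 0" "y = mI (opow (mI a u) d) y" using sandwich_return(1)[OF fin] by blast
  then obtain d' where "y = mI (opow (mI a u) (Suc d')) y" using gr0_implies_Suc by blast
  then have "y = mI (mI (opow (mI a u) d') a) (mI u y)" by (simp only: opow_Suc_right mI_assoc)
  then show ?thesis unfolding leL_def by blast
qed

lemma stable_R:
  assumes fin: "J_above_finite TYPE('a::semigroup_mult)" and J: "leJ (y::'a option) (mI y u)"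
  shows "leR y (mI y u)"
proof -
  obtain a b where "y = mI (mI a (mI y u)) b" using J unfolding leJ_def by blast
  then have "y = mI (mI a y) (mI u b)" by (simp add: mI_assoc)
  then obtain d where "d > 0" "y = mI y (opow (mI u b) d)" using sandwich_return(2)[OF fin] by blast
  then obtain d' where "y = mI y (opow (mI u b) (Suc d'))" using gr0_implies_Suc by blast
  then have "y = mI (mI y u) (mI b (opow (mI u b) d'))" by (simp add: mI_assoc)
  then show ?thesis unfolding leR_def by blast
qed

context
  fixes dummy :: "'a::semigroup_mult itself"
  assumes fin: "J_above_finite TYPE('a)"
begin

lemma leL_J_eqL: "leL (x::'a option) y \<Longrightarrow> leJ y x \<Longrightarrow> eqL x y"
  unfolding leL_def eqL_def using stable_L[OF fin] by (metis leL_def leL_refl)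

lemma leR_J_eqR: "leR (x::'a option) y \<Longrightarrow> leJ y x \<Longrightarrow> eqR x y"
  unfolding leR_def eqR_def using stable_R[OF fin] by (metis leR_def leR_refl)

lemma ltL_ltJ: "ltL (x::'a option) y \<Longrightarrow> ltJ x y"
  unfolding ltL_def ltJ_def using leL_J_eqL leL_leJ unfolding eqL_def by blast

end


definition chainJ :: "'a::semigroup_mult option \<Rightarrow> nat \<Rightarrow> bool" where
  "chainJ m k \<longleftrightarrow> (\<exists>c::nat \<Rightarrow> 'a option. c 0 = m \<and> (\<forall>i<k. ltJ (c i) (c (Suc i))))"

lemma hJ_chainJ: "hJ m = (GREATEST k. chainJ m k)"
  unfolding hJ_def chainJ_def by simp

lemma chain_ltJ:
  assumes "\<forall>i<k. ltJ (c i) (c (Suc i))" "i < j" "j \<le> k"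
  shows "ltJ (c i) (c j)"
  using assms(2,3)
proof (induction j)
  case (Suc j)
  have "ltJ (c j) (c (Suc j))" using assms(1) Suc.prems by simp
  then show ?case using Suc ltJ_trans by (cases "i = j") auto
qed simp

text \<open>A strict chain starting at \<open>m\<close> consists of distinct elements $\mathcal J$-above
  \<open>m\<close>; so its length is bounded by the number of such elements.\<close>

lemma chainJ_bound:
  assumes fin: "J_above_finite TYPE('a::semigroup_mult)" and ch: "chainJ (m::'a option) k"
  shows "k < card {z. leJ m z}"
proof -
  obtain c where c: "c 0 = m" "\<forall>i<k. ltJ (c i) (c (Suc i))" using ch unfolding chainJ_def by blast
  have "leJ m (c i)" if "i \<le> k" for i
    using chain_ltJ[OF c(2), of 0 i] that c(1) unfolding ltJ_def by (cases "i = 0") auto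
  then have "c ` {0..k} \<subseteq> {z. leJ m z}" by auto
  moreover have "inj_on c {0..k}"
    by (rule inj_onI, rule ccontr) (metis atLeastAtMost_iff chain_ltJ[OF c(2)] linorder_neqE_nat ltJ_irrefl)
  ultimately have "card {0..k} \<le> card {z. leJ m z}"
    using card_inj_on_le finite_J_above[OF fin] by blast
  then show ?thesis by simp
qed

context
  fixes dummy :: "'a::semigroup_mult itself"
  assumes fin: "J_above_finite TYPE('a)"
begin

lemma hJ_chain: "chainJ (m::'a option) (hJ m)"
proof -
  have "chainJ m 0" unfolding chainJ_def by auto
  then show ?thesis
    unfolding hJ_chainJ using chainJ_bound[OF fin] by (metis GreatestI_nat less_imp_le_nat)
qed

lemma chainJ_le_hJ: "chainJ (m::'a option) k \<Longrightarrow> k \<le> hJ m"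
  unfolding hJ_chainJ using chainJ_bound[OF fin] by (metis Greatest_le_nat less_imp_le_nat)

lemma hJ_lt: "ltJ (x::'a option) y \<Longrightarrow> hJ y < hJ x"
proof -
  assume xy: "ltJ x y"
  obtain c where c: "c 0 = y" "\<forall>i<hJ y. ltJ (c i) (c (Suc i))"
    using hJ_chain[of y] unfolding chainJ_def by blast
  have "chainJ x (Suc (hJ y))"
    unfolding chainJ_def
    by (rule exI[of _ "\<lambda>i. if i = 0 then x else c (i - 1)"]) (use c xy in \<open>auto simp: less_Suc_eq_0_disj\<close>)
  then show ?thesis using chainJ_le_hJ by fastforce
qed

lemma hJ_le_J: "leJ (x::'a option) y \<Longrightarrow> leJ y x \<Longrightarrow> hJ y \<le> hJ x"
proof -
  assume xy: "leJ x y" and yx: "leJ y x"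
  obtain c where c: "c 0 = y" "\<forall>i<hJ y. ltJ (c i) (c (Suc i))"
    using hJ_chain[of y] unfolding chainJ_def by blast
  have "ltJ x (c 1)" if "0 < hJ y" using c that xy yx unfolding ltJ_def by (auto intro: leJ_trans)
  then have "chainJ x (hJ y)"
    unfolding chainJ_def
    by (rule_tac exI[of _ "\<lambda>i. if i = 0 then x else c i"]) (use c in \<open>auto simp: less_Suc_eq_0_disj\<close>)
  then show ?thesis using chainJ_le_hJ by blast
qed

lemma hJ_mono: "leJ (x::'a option) y \<Longrightarrow> hJ y \<le> hJ x"
  using hJ_le_J hJ_lt unfolding ltJ_def by (meson less_imp_le_nat)

lemma hJ_eqL: "eqL (x::'a option) y \<Longrightarrow> hJ x = hJ y"
  unfolding eqL_def using hJ_le_J leL_leJ by (meson le_antisym)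

lemma hJ_eq_leJ: "leJ (x::'a option) y \<Longrightarrow> hJ x = hJ y \<Longrightarrow> leJ y x"
  using hJ_lt unfolding ltJ_def by fastforce

lemma hJ_mult_right: "hJ (x::'a option) \<le> hJ (mI x n)"
  by (rule hJ_mono) (rule leJ_self_right)

end


section \<open>Keeping the first element of each $\mathcal L$-class\<close>

text \<open>On $\le_{\mathcal L}$-sorted lists it coincides with the operation
  \<open>lm\<close> of the Rhodes product, and it has a convenient algebra (idempotence, behaviour
  under appending, filtering and right multiplication).\<close>

fun lfirst :: "'a::semigroup_mult option list \<Rightarrow> 'a option list" where
  "lfirst [] = []"
| "lfirst (x # xs) = x # lfirst (filter (\<lambda>y. \<not> eqL y x) xs)"

declare lfirst.simps(2)[simp del]

lemma lfirst_Cons: "lfirst (x # xs) = x # lfirst (filter (\<lambda>y. \<not> eqL y x) xs)"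
  by (rule lfirst.simps(2))

lemma lfirst_subset: "set (lfirst xs) \<subseteq> set xs"
  by (induction xs rule: lfirst.induct) (auto simp: lfirst_Cons)

lemma lfirst_eq_Nil[simp]: "lfirst xs = [] \<longleftrightarrow> xs = []"
  by (cases xs) (auto simp: lfirst_Cons)

lemma lfirst_covers: "a \<in> set xs \<Longrightarrow> \<exists>b\<in>set (lfirst xs). eqL a b"
proof (induction xs rule: lfirst.induct)
  case 1 then show ?case by simp
next
  case (2 x xs)
  show ?case
  proof (cases "a = x \<or> eqL a x")
    case True then show ?thesis by (auto simp: lfirst_Cons)
  next
    case False
    then have "a \<in> set (filter (\<lambda>y. \<not> eqL y x) xs)" using 2(2) by auto
    then show ?thesis using 2(1) by (auto simp: lfirst_Cons)
  qed
qed

definition L_invariant :: "('a::semigroup_mult option \<Rightarrow> bool) \<Rightarrow> bool" where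
  "L_invariant P \<longleftrightarrow> (\<forall>x y. eqL x y \<longrightarrow> P x = P y)"

lemma L_invariant_not_eqL: "L_invariant (\<lambda>y. \<not> eqL y x)"
  unfolding L_invariant_def using eqL_sym eqL_trans by blast

lemma filter_lfirst: "L_invariant P \<Longrightarrow> filter P (lfirst B) = lfirst (filter P B)"
proof (induction B rule: lfirst.induct)
  case 1 then show ?case by simp
next
  case (2 x xs)
  show ?case
  proof (cases "P x")
    case True
    have "filter P (lfirst (x # xs)) = x # lfirst (filter P (filter (\<lambda>y. \<not> eqL y x) xs))"
      using True 2 by (simp add: lfirst_Cons)
    also have "filter P (filter (\<lambda>y. \<not> eqL y x) xs) = filter (\<lambda>y. \<not> eqL y x) (filter P xs)"
      by (simp add: filter_filter conj_commute)
    finally show ?thesis using True by (simp add: lfirst_Cons)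
  next
    case False
    have "filter P (lfirst (x # xs)) = lfirst (filter P (filter (\<lambda>y. \<not> eqL y x) xs))"
      using False 2 by (simp add: lfirst_Cons)
    also have "filter P (filter (\<lambda>y. \<not> eqL y x) xs) = filter P xs"
      unfolding filter_filter
    proof (rule filter_cong)
      fix y assume "y \<in> set xs"
      show "(\<not> eqL y x \<and> P y) = P y" using False 2(2) unfolding L_invariant_def by metis
    qed simp
    finally show ?thesis using False by simp
  qed
qed

lemma lfirst_idem: "lfirst (lfirst B) = lfirst B"
proof (induction B rule: lfirst.induct)
  case 1 then show ?case by simp
next
  case (2 x xs)
  have "lfirst (lfirst (x # xs)) = x # lfirst (filter (\<lambda>y. \<not> eqL y x) (lfirst (filter (\<lambda>y. \<not> eqL y x) xs)))"
    by (simp add: lfirst_Cons)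
  also have "filter (\<lambda>y. \<not> eqL y x) (lfirst (filter (\<lambda>y. \<not> eqL y x) xs))
     = lfirst (filter (\<lambda>y. \<not> eqL y x) xs)"
    by (simp add: filter_lfirst[OF L_invariant_not_eqL] 2)
  finally show ?case using 2 by (simp add: lfirst_Cons)
qed

lemma lfirst_append:
  "lfirst (A @ B) = lfirst A @ lfirst (filter (\<lambda>z. \<forall>a\<in>set A. \<not> eqL z a) B)"
proof (induction A arbitrary: B rule: lfirst.induct)
  case 1 then show ?case by simp
next
  case (2 x xs)
  have "lfirst ((x # xs) @ B) = x # lfirst (filter (\<lambda>y. \<not> eqL y x) xs @ filter (\<lambda>y. \<not> eqL y x) B)"
    by (simp add: lfirst_Cons)
  also have "\<dots> = x # lfirst (filter (\<lambda>y. \<not> eqL y x) xs) @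
     lfirst (filter (\<lambda>z. \<forall>a\<in>set (filter (\<lambda>y. \<not> eqL y x) xs). \<not> eqL z a) (filter (\<lambda>y. \<not> eqL y x) B))"
    using 2 by simp
  also have "filter (\<lambda>z. \<forall>a\<in>set (filter (\<lambda>y. \<not> eqL y x) xs). \<not> eqL z a) (filter (\<lambda>y. \<not> eqL y x) B)
     = filter (\<lambda>z. \<forall>a\<in>set (x # xs). \<not> eqL z a) B"
    unfolding filter_filter
  proof (rule filter_cong)
    fix z assume "z \<in> set B"
    show "((\<not> eqL z x) \<and> (\<forall>a\<in>set (filter (\<lambda>y. \<not> eqL y x) xs). \<not> eqL z a)) =
          (\<forall>a\<in>set (x # xs). \<not> eqL z a)"
      by (auto dest: eqL_trans)
  qed simp
  finally show ?case by (simp add: lfirst_Cons)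
qed

lemma lfirst_append_left: "lfirst (lfirst A @ B) = lfirst (A @ B)"
proof -
  have "(\<lambda>z. \<forall>a\<in>set (lfirst A). \<not> eqL z a) = (\<lambda>z. \<forall>a\<in>set A. \<not> eqL z a)"
  proof (rule ext)
    fix z
    show "(\<forall>a\<in>set (lfirst A). \<not> eqL z a) = (\<forall>a\<in>set A. \<not> eqL z a)"
    proof
      assume h: "\<forall>a\<in>set (lfirst A). \<not> eqL z a"
      show "\<forall>a\<in>set A. \<not> eqL z a"
      proof
        fix a assume "a \<in> set A"
        then obtain b where "b \<in> set (lfirst A)" "eqL a b" using lfirst_covers by blast
        then show "\<not> eqL z a" using h eqL_trans by blast
      qed
    qed (use lfirst_subset in blast)
  qed
  then show ?thesis by (simp add: lfirst_append lfirst_idem)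
qed

lemma lfirst_append_right: "lfirst (A @ lfirst B) = lfirst (A @ B)"
proof -
  have "L_invariant (\<lambda>z. \<forall>a\<in>set A. \<not> eqL z a)"
    unfolding L_invariant_def using eqL_sym eqL_trans by blast
  then show ?thesis by (simp add: lfirst_append filter_lfirst lfirst_idem)
qed

lemma lfirst_append_filter_member:
  assumes "c \<in> set A"
  shows "lfirst (A @ filter (\<lambda>z. \<not> eqL z c) R) = lfirst (A @ R)"
proof -
  have "filter (\<lambda>z. \<forall>a\<in>set A. \<not> eqL z a) (filter (\<lambda>z. \<not> eqL z c) R)
      = filter (\<lambda>z. \<forall>a\<in>set A. \<not> eqL z a) R"
    unfolding filter_filter using assms by (intro filter_cong) auto
  then show ?thesis by (simp only: lfirst_append)
qed

lemma lfirst_map: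
  assumes f: "\<And>x y. eqL x y \<Longrightarrow> eqL (f x) (f y)"
  shows "lfirst (map f (lfirst w)) = lfirst (map f w)"
proof (induction "length w" arbitrary: w rule: less_induct)
  case less
  show ?case
  proof (cases w)
    case Nil then show ?thesis by simp
  next
    case (Cons x xs)
    define P where "P = (\<lambda>y. \<not> eqL (f y) (f x))"
    have LP: "L_invariant P" unfolding L_invariant_def P_def using f eqL_sym eqL_trans by blast
    have "lfirst (map f (lfirst w)) = f x # lfirst (filter (\<lambda>y. \<not> eqL y (f x)) (map f (lfirst (filter (\<lambda>y. \<not> eqL y x) xs))))"
      using Cons by (simp add: lfirst_Cons)
    also have "filter (\<lambda>y. \<not> eqL y (f x)) (map f (lfirst (filter (\<lambda>y. \<not> eqL y x) xs)))
       = map f (filter P (lfirst (filter (\<lambda>y. \<not> eqL y x) xs)))"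
      by (simp add: filter_map P_def comp_def)
    also have "\<dots> = map f (lfirst (filter P (filter (\<lambda>y. \<not> eqL y x) xs)))"
      by (simp only: filter_lfirst[OF LP])
    also have "filter P (filter (\<lambda>y. \<not> eqL y x) xs) = filter P xs"
      unfolding filter_filter
    proof (rule filter_cong)
      fix y assume "y \<in> set xs"
      show "(\<not> eqL y x \<and> P y) = P y" unfolding P_def using f by blast
    qed simp
    also have "lfirst (map f (lfirst (filter P xs))) = lfirst (map f (filter P xs))"
      using less Cons by (simp add: le_imp_less_Suc)
    also have "map f (filter P xs) = filter (\<lambda>y. \<not> eqL y (f x)) (map f xs)"
      by (simp add: filter_map P_def comp_def)
    finally show ?thesis using Cons by (simp add: lfirst_Cons)
  qed
qed

text \<open>On a $\le_{\mathcal L}$-sorted list the $\mathcal L$-classes are contiguous blocks, so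
  \<open>lm\<close> (which compares neighbours only) is \<open>lfirst\<close>.\<close>

lemma lm_eq_lfirst: "sorted_wrt leL w \<Longrightarrow> lm w = lfirst w"
proof (induction w rule: lm.induct)
  case 1 then show ?case by simp
next
  case (2 x) then show ?case by (simp add: lfirst_Cons)
next
  case (3 x y zs)
  show ?case
  proof (cases "eqL x y")
    case True
    have "lm (x # y # zs) = lfirst (x # zs)" using True 3 by simp
    moreover have "filter (\<lambda>z. \<not> eqL z x) (y # zs) = filter (\<lambda>z. \<not> eqL z x) zs"
      using True eqL_sym by simp
    ultimately show ?thesis unfolding lfirst_Cons by simp
  next
    case False
    have "lm (x # y # zs) = x # lfirst (y # zs)" using False 3 by simp
    moreover have "filter (\<lambda>z. \<not> eqL z x) (y # zs) = y # zs"
    proof (rule filter_True)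
      show "\<forall>z\<in>set (y # zs). \<not> eqL z x"
      proof
        fix z assume z: "z \<in> set (y # zs)"
        show "\<not> eqL z x"
        proof
          assume "eqL z x"
          then have "leL z x" unfolding eqL_def by simp
          moreover have "leL x y" "leL y z \<or> z = y" using 3(3) z by auto
          ultimately have "leL y x" using leL_trans by auto
          then show False using False \<open>leL x y\<close> unfolding eqL_def by simp
        qed
      qed
    qed
    ultimately show ?thesis by (simp add: lfirst_Cons)
  qed
qed

lemma sorted_lfirst: "sorted_wrt leL w \<Longrightarrow> sorted_wrt ltL (lfirst w)"
proof (induction w rule: lfirst.induct)
  case 1 then show ?case by simp
next
  case (2 x xs)
  have s: "sorted_wrt leL (filter (\<lambda>y. \<not> eqL y x) xs)" using 2(2) sorted_wrt_filter by auto
  have "\<forall>z\<in>set (lfirst (filter (\<lambda>y. \<not> eqL y x) xs)). ltL x z"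
  proof
    fix z assume "z \<in> set (lfirst (filter (\<lambda>y. \<not> eqL y x) xs))"
    then have "z \<in> set xs" "\<not> eqL z x" using lfirst_subset[of "filter (\<lambda>y. \<not> eqL y x) xs"] by auto
    then show "ltL x z" using 2(2) unfolding ltL_def eqL_def by auto
  qed
  then show ?case using 2(1)[OF s] by (simp add: lfirst_Cons)
qed

lemma lfirst_strict: "sorted_wrt ltL w \<Longrightarrow> lfirst w = w"
proof (induction w rule: lfirst.induct)
  case 1 then show ?case by simp
next
  case (2 x xs)
  have "filter (\<lambda>y. \<not> eqL y x) xs = xs"
    using 2(2) by (intro filter_True) (auto simp: ltL_def eqL_def)
  then show ?case using 2 by (simp add: lfirst_Cons)
qed

lemma last_filter: "P (last xs) \<Longrightarrow> xs \<noteq> [] \<Longrightarrow> last (filter P xs) = last xs"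
  by (metis append_butlast_last_id filter.simps(1) filter.simps(2) filter_append last_snoc)

lemma sorted_leL_last: "sorted_wrt leL xs \<Longrightarrow> z \<in> set xs \<Longrightarrow> leL z (last xs)"
  by (induction xs) (auto simp: last_in_set)

lemma last_lfirst:
  "sorted_wrt leL w \<Longrightarrow> w \<noteq> [] \<Longrightarrow> last (lfirst w) = hd (filter (\<lambda>z. eqL z (last w)) w)"
proof (induction w rule: lfirst.induct)
  case (2 x xs)
  show ?case
  proof (cases "filter (\<lambda>y. \<not> eqL y x) xs = []")
    case True
    then have "\<forall>y\<in>set xs. eqL y x" by (simp add: filter_empty_conv)
    then have "eqL x (last (x # xs))" using eqL_sym by (cases xs) auto
    then show ?thesis using True by (simp add: lfirst_Cons)
  next
    case False
    define ys where "ys = filter (\<lambda>y. \<not> eqL y x) xs"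
    have xs: "xs \<noteq> []" using False by auto
    obtain z where z: "z \<in> set xs" "\<not> eqL z x" using False by (auto simp: filter_empty_conv)
    have "leL x z" "leL z (last xs)" using 2(2) z(1) sorted_leL_last[of xs z] by auto
    then have nl: "\<not> eqL (last xs) x" using z(2) leL_trans unfolding eqL_def by blast
    have ys: "ys \<noteq> []" "last ys = last xs" "sorted_wrt leL ys"
      using False last_filter[of "\<lambda>y. \<not> eqL y x", OF nl xs] 2(2) sorted_wrt_filter
      by (auto simp: ys_def)
    have "last (lfirst (x # xs)) = last (lfirst ys)" using ys by (simp add: lfirst_Cons ys_def)
    also have "\<dots> = hd (filter (\<lambda>z. eqL z (last xs)) ys)" using 2(1) ys ys_def by simp
    also have "filter (\<lambda>z. eqL z (last xs)) ys = filter (\<lambda>z. eqL z (last (x # xs))) (x # xs)"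
      unfolding ys_def filter_filter using nl xs by (auto intro!: filter_cong dest: eqL_sym eqL_trans)
    finally show ?thesis .
  qed
qed simp

section \<open>The Rhodes expansion\<close>

text \<open>The
  product is computed by \<open>lfirst\<close>; we derive closure, associativity and unit laws, and
  describe how left multiplication by \<open>\<rho>\<close> changes the entries of a chain: read from
  the identity end (via \<open>rev\<close>), all entries are kept except the last, which is replaced
  by an $\mathcal L$-equivalent element \<open>new_head \<rho> (hd \<sigma>)\<close>.\<close>


lemma rhodesD: "\<sigma> \<in> rhodes \<Longrightarrow> \<sigma> \<noteq> [] \<and> last \<sigma> = None \<and> sorted_wrt ltL \<sigma>"
  unfolding rhodes_def by simp

lemma rhodes_sorted_leL: "\<sigma> \<in> rhodes \<Longrightarrow> sorted_wrt leL \<sigma>"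
  by (rule sorted_wrt_mono_rel[of _ ltL]) (auto simp: ltL_leL dest: rhodesD)

lemma rhodes_hd_tl: "\<sigma> \<in> rhodes \<Longrightarrow> \<sigma> = hd \<sigma> # tl \<sigma>"
  by (drule rhodesD) simp

lemma rh_input_eq:
  assumes "\<sigma> \<in> rhodes" "\<tau> \<in> rhodes"
  shows "map (\<lambda>m. mI m (hd \<tau>)) (butlast \<sigma>) @ \<tau> = map (\<lambda>m. mI m (hd \<tau>)) \<sigma> @ tl \<tau>"
proof -
  have s: "\<sigma> = butlast \<sigma> @ [None]" using rhodesD[OF assms(1)] append_butlast_last_id by metis
  have "map (\<lambda>m. mI m (hd \<tau>)) (butlast \<sigma> @ [None]) = map (\<lambda>m. mI m (hd \<tau>)) (butlast \<sigma>) @ [hd \<tau>]"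
    by simp
  then have "map (\<lambda>m. mI m (hd \<tau>)) \<sigma> = map (\<lambda>m. mI m (hd \<tau>)) (butlast \<sigma>) @ [hd \<tau>]"
    using s by metis
  then show ?thesis using rhodes_hd_tl[OF assms(2)] by simp
qed

lemma rh_input_sorted:
  assumes "\<sigma> \<in> rhodes" "\<tau> \<in> rhodes"
  shows "sorted_wrt leL (map (\<lambda>m. mI m (hd \<tau>)) \<sigma> @ tl \<tau>)"
proof -
  have s1: "sorted_wrt leL (map (\<lambda>m. mI m (hd \<tau>)) \<sigma>)"
    unfolding sorted_wrt_map
    by (rule sorted_wrt_mono_rel[OF _ rhodes_sorted_leL[OF assms(1)]]) (simp add: leL_mult_right)
  have s2: "sorted_wrt leL (tl \<tau>)" using rhodes_sorted_leL[OF assms(2)] by (metis sorted_wrt.simps(2) rhodes_hd_tl[OF assms(2)])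
  have s3: "\<forall>a\<in>set (map (\<lambda>m. mI m (hd \<tau>)) \<sigma>). \<forall>b\<in>set (tl \<tau>). leL a b"
  proof (intro ballI)
    fix a b assume a: "a \<in> set (map (\<lambda>m. mI m (hd \<tau>)) \<sigma>)" and b: "b \<in> set (tl \<tau>)"
    have "leL a (hd \<tau>)" using a leL_self by auto
    moreover have "leL (hd \<tau>) b" using rhodes_sorted_leL[OF assms(2)] b rhodes_hd_tl[OF assms(2)]
      by (metis sorted_wrt.simps(2))
    ultimately show "leL a b" by (rule leL_trans)
  qed
  show ?thesis using s1 s2 s3 by (simp add: sorted_wrt_append)
qed

lemma rh_mult_lfirst:
  assumes "\<sigma> \<in> rhodes" "\<tau> \<in> rhodes"
  shows "rh_mult \<sigma> \<tau> = lfirst (map (\<lambda>m. mI m (hd \<tau>)) \<sigma> @ tl \<tau>)"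
  unfolding rh_mult_def rh_input_eq[OF assms]
  by (rule lm_eq_lfirst[OF rh_input_sorted[OF assms]])

lemma None_last: "sorted_wrt ltL xs \<Longrightarrow> None \<in> set xs \<Longrightarrow> last xs = None"
proof -
  assume s: "sorted_wrt ltL xs" and n: "None \<in> set xs"
  obtain ys zs where xs: "xs = ys @ None # zs" using n split_list by fastforce
  have "zs = []"
  proof (rule ccontr)
    assume "zs \<noteq> []"
    then have "ltL None (hd zs)" using s xs by (simp add: sorted_wrt_append)
    then show False unfolding ltL_def using leL_None by fastforce
  qed
  then show ?thesis using xs by simp
qed

lemma rh_mult_closed:
  assumes "\<sigma> \<in> rhodes" "\<tau> \<in> rhodes"
  shows "rh_mult \<sigma> \<tau> \<in> rhodes"
proof -
  define W where "W = map (\<lambda>m. mI m (hd \<tau>)) \<sigma> @ tl \<tau>"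
  have ne: "W \<noteq> []" using rhodesD[OF assms(1)] W_def by simp
  have lastW: "last W = None"
  proof (cases "tl \<tau> = []")
    case True
    then have "\<tau> = [hd \<tau>]" using rhodes_hd_tl[OF assms(2)] by simp
    then have "hd \<tau> = None" using rhodesD[OF assms(2)] by (metis last.simps)
    then show ?thesis using True rhodesD[OF assms(1)] W_def by (simp add: last_map)
  next
    case False
    then have "last (tl \<tau>) = None" using rhodesD[OF assms(2)] rhodes_hd_tl[OF assms(2)] by (metis last_ConsR)
    then show ?thesis using False W_def by simp
  qed
  have "None \<in> set W" using ne lastW by (metis last_in_set)
  then obtain b where b: "b \<in> set (lfirst W)" "eqL None b" using lfirst_covers by blast
  then have "b = None" using eqL_None eqL_sym by blast
  have so: "sorted_wrt ltL (lfirst W)" using sorted_lfirst rh_input_sorted[OF assms] W_def by simp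
  have "last (lfirst W) = None" using None_last[OF so] b \<open>b = None\<close> by simp
  then show ?thesis unfolding rhodes_def using rh_mult_lfirst[OF assms] W_def so ne by simp
qed

lemma rh_mult_split:
  assumes "\<sigma> \<in> rhodes" "\<tau> \<in> rhodes"
  shows "rh_mult \<sigma> \<tau> = lfirst (map (\<lambda>m. mI m (hd \<tau>)) \<sigma>) @ tl \<tau>"
proof -
  define A where "A = map (\<lambda>m. mI m (hd \<tau>)) \<sigma>"
  have st: "sorted_wrt ltL \<tau>" using rhodesD[OF assms(2)] by simp
  have "filter (\<lambda>z. \<forall>a\<in>set A. \<not> eqL z a) (tl \<tau>) = tl \<tau>"
  proof (rule filter_True, intro ballI)
    fix z a assume z: "z \<in> set (tl \<tau>)" and a: "a \<in> set A"
    have la: "leL a (hd \<tau>)" using a A_def leL_self by auto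
    have lz: "ltL (hd \<tau>) z" using st z rhodes_hd_tl[OF assms(2)] by (metis sorted_wrt.simps(2))
    show "\<not> eqL z a"
    proof
      assume "eqL z a"
      then have "leL z (hd \<tau>)" using la leL_trans unfolding eqL_def by blast
      then show False using lz unfolding ltL_def by simp
    qed
  qed
  moreover have "lfirst (tl \<tau>) = tl \<tau>"
    using st rhodes_hd_tl[OF assms(2)] lfirst_strict by (metis sorted_wrt.simps(2))
  ultimately show ?thesis using rh_mult_lfirst[OF assms] lfirst_append[of A "tl \<tau>"] A_def by simp
qed

text \<open>The new leftmost entry produced when \<open>\<rho>\<close> multiplies a chain with leftmost entry \<open>x\<close>.\<close>

definition new_head :: "'a::semigroup_mult option list \<Rightarrow> 'a option \<Rightarrow> 'a option" where
  "new_head \<rho> x = last (lfirst (map (\<lambda>m. mI m x) \<rho>))"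

lemma rh_mult_len: "\<rho> \<in> rhodes \<Longrightarrow> \<sigma> \<in> rhodes \<Longrightarrow> length \<sigma> \<le> length (rh_mult \<rho> \<sigma>)"
proof -
  assume a: "\<rho> \<in> rhodes" "\<sigma> \<in> rhodes"
  define F where "F = lfirst (map (\<lambda>m. mI m (hd \<sigma>)) \<rho>)"
  have "F \<noteq> []" using rhodesD[OF a(1)] F_def by simp
  then have "length F \<ge> 1" by (simp add: Suc_leI)
  moreover have "length (rh_mult \<rho> \<sigma>) = length F + length (tl \<sigma>)"
    using rh_mult_split[OF a] F_def by simp
  moreover have "length (tl \<sigma>) = length \<sigma> - 1" by simp
  ultimately show ?thesis by linarith
qed

lemma rev_rh_mult_nth:
  assumes "\<rho> \<in> rhodes" "\<sigma> \<in> rhodes" "i < length \<sigma>"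
  shows "rev (rh_mult \<rho> \<sigma>) ! i = (if i = length \<sigma> - 1 then new_head \<rho> (hd \<sigma>) else rev \<sigma> ! i)"
proof -
  define F where "F = lfirst (map (\<lambda>m. mI m (hd \<sigma>)) \<rho>)"
  have F: "F \<noteq> []" using rhodesD[OF assms(1)] F_def by simp
  have r: "rev (rh_mult \<rho> \<sigma>) = rev (tl \<sigma>) @ rev F" using rh_mult_split[OF assms(1,2)] F_def by simp
  have rs: "rev \<sigma> = rev (tl \<sigma>) @ [hd \<sigma>]" using rhodes_hd_tl[OF assms(2)] by (metis rev.simps(2))
  have lt: "length (tl \<sigma>) = length \<sigma> - 1" by simp
  show ?thesis
  proof (cases "i = length \<sigma> - 1")
    case True
    then have "rev (rh_mult \<rho> \<sigma>) ! i = rev F ! 0" using r lt by (simp add: nth_append)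
    also have "\<dots> = last F" using F by (simp add: hd_conv_nth[symmetric] hd_rev)
    finally show ?thesis using True by (simp add: new_head_def F_def)
  next
    case False
    then have "i < length (tl \<sigma>)" using assms(3) lt by simp
    then show ?thesis using r rs False by (simp add: nth_append)
  qed
qed


lemma new_head_eq:
  assumes "\<rho> \<in> rhodes"
  shows "new_head \<rho> x = mI (hd (filter (\<lambda>m. eqL (mI m x) x) \<rho>)) x"
proof -
  have s: "sorted_wrt leL (map (\<lambda>m. mI m x) \<rho>)"
    unfolding sorted_wrt_map
    by (rule sorted_wrt_mono_rel[OF _ rhodes_sorted_leL[OF assms]]) (simp add: leL_mult_right)
  have ne: "map (\<lambda>m. mI m x) \<rho> \<noteq> []" using rhodesD[OF assms] by simp
  have l: "last (map (\<lambda>m. mI m x) \<rho>) = x" using rhodesD[OF assms] by (simp add: last_map)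
  have "new_head \<rho> x = hd (filter (\<lambda>z. eqL z x) (map (\<lambda>m. mI m x) \<rho>))"
    unfolding new_head_def using last_lfirst[OF s ne] l by simp
  also have "\<dots> = hd (map (\<lambda>m. mI m x) (filter (\<lambda>m. eqL (mI m x) x) \<rho>))"
    by (simp add: filter_map comp_def)
  also have "\<dots> = mI (hd (filter (\<lambda>m. eqL (mI m x) x) \<rho>)) x"
  proof -
    have "None \<in> set \<rho>" using rhodesD[OF assms] by (metis last_in_set)
    then have "filter (\<lambda>m. eqL (mI m x) x) \<rho> \<noteq> []" by (auto simp: filter_empty_conv intro: bexI[of _ None])
    then show ?thesis by (simp add: hd_map)
  qed
  finally show ?thesis .
qed

lemma new_head_eqL:
  assumes "\<rho> \<in> rhodes"
  shows "eqL (new_head \<rho> x) x"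
proof -
  have "None \<in> set \<rho>" using rhodesD[OF assms] by (metis last_in_set)
  then have "filter (\<lambda>m. eqL (mI m x) x) \<rho> \<noteq> []" by (auto simp: filter_empty_conv intro: bexI[of _ None])
  then have "hd (filter (\<lambda>m. eqL (mI m x) x) \<rho>) \<in> set (filter (\<lambda>m. eqL (mI m x) x) \<rho>)"
    by (rule list.set_sel(1))
  then have "eqL (mI (hd (filter (\<lambda>m. eqL (mI m x) x) \<rho>)) x) x" by simp
  then show ?thesis using new_head_eq[OF assms] by simp
qed

context
  fixes dummy :: "'a::semigroup_mult itself"
  assumes fin: "J_above_finite TYPE('a)"
begin

text \<open>If right multiplication by \<open>n\<close> stays in the $\mathcal J$-class of \<open>x\<close>, it does not
  change which left multipliers fix the $\mathcal L$-class; so \<open>new_head\<close> commutes with it.\<close>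

lemma eqL_absorb_right:
  assumes J: "leJ (x::'a option) (mI x n)"
  shows "eqL (mI m (mI x n)) (mI x n) \<longleftrightarrow> eqL (mI m x) x"
proof
  assume "eqL (mI m x) x"
  then show "eqL (mI m (mI x n)) (mI x n)" using eqL_mult_right[of "mI m x" x n] by (simp add: mI_assoc)
next
  assume h: "eqL (mI m (mI x n)) (mI x n)"
  have "leJ (mI x n) (mI (mI m x) n)" using h unfolding eqL_def by (simp add: mI_assoc leL_leJ)
  moreover have "leJ (mI (mI m x) n) (mI m x)" by (rule leJ_self_right)
  ultimately have "leJ x (mI m x)" using J leJ_trans by blast
  then show "eqL (mI m x) x" using leL_J_eqL[OF fin] leL_self by blast
qed

lemma new_head_mult_right:
  assumes r: "\<rho> \<in> rhodes" and J: "leJ (x::'a option) (mI x n)"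
  shows "new_head \<rho> (mI x n) = mI (new_head \<rho> x) n"
proof -
  have "filter (\<lambda>m. eqL (mI m (mI x n)) (mI x n)) \<rho> = filter (\<lambda>m. eqL (mI m x) x) \<rho>"
    using eqL_absorb_right[OF J] by simp
  then show ?thesis using new_head_eq[OF r] by (simp add: mI_assoc)
qed

end

lemma rh_unit: "[None] \<in> rhodes" unfolding rhodes_def by simp

lemma rh_left_unit: "\<sigma> \<in> rhodes \<Longrightarrow> rh_mult [None] \<sigma> = \<sigma>"
proof -
  assume s: "\<sigma> \<in> rhodes"
  have "rh_mult [None] \<sigma> = hd \<sigma> # tl \<sigma>" using rh_mult_split[OF rh_unit s] by (simp add: lfirst_Cons)
  then show ?thesis using rhodes_hd_tl[OF s] by simp
qed

lemma rh_right_unit: "\<sigma> \<in> rhodes \<Longrightarrow> rh_mult \<sigma> [None] = \<sigma>"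
proof -
  assume s: "\<sigma> \<in> rhodes"
  have "rh_mult \<sigma> [None] = lfirst \<sigma>" using rh_mult_split[OF s rh_unit] by simp
  then show ?thesis using lfirst_strict[of \<sigma>] rhodesD[OF s] by simp
qed

lemma rh_assoc:
  assumes a: "a \<in> rhodes" and b: "b \<in> rhodes" and c: "c \<in> rhodes"
  shows "rh_mult (rh_mult a b) c = rh_mult a (rh_mult b c)"
proof -
  define x where "x = hd b"
  define y where "y = hd c"
  have ab: "rh_mult a b \<in> rhodes" using rh_mult_closed[OF a b] .
  have bc: "rh_mult b c \<in> rhodes" using rh_mult_closed[OF b c] .
  have "rh_mult (rh_mult a b) c = lfirst (map (\<lambda>m. mI m y) (rh_mult a b) @ tl c)"
    using rh_mult_lfirst[OF ab c] y_def by simp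
  also have "\<dots> = lfirst (lfirst (map (\<lambda>m. mI m y) (lfirst (map (\<lambda>m. mI m x) a @ tl b))) @ tl c)"
    using rh_mult_lfirst[OF a b] x_def by (simp add: lfirst_append_left)
  also have "\<dots> = lfirst (lfirst (map (\<lambda>m. mI m y) (map (\<lambda>m. mI m x) a @ tl b)) @ tl c)"
    using lfirst_map[of "\<lambda>m. mI m y", OF eqL_mult_right] by simp
  also have "\<dots> = lfirst (map (\<lambda>m. mI m (mI x y)) a @ map (\<lambda>m. mI m y) (tl b) @ tl c)"
    by (simp add: lfirst_append_left mI_assoc comp_def)
  finally have lhs: "rh_mult (rh_mult a b) c = lfirst (map (\<lambda>m. mI m (mI x y)) a @ map (\<lambda>m. mI m y) (tl b) @ tl c)" .
  define R where "R = map (\<lambda>m. mI m y) (tl b) @ tl c"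
  have bcq: "rh_mult b c = mI x y # lfirst (filter (\<lambda>z. \<not> eqL z (mI x y)) R)"
  proof -
    have "rh_mult b c = lfirst (map (\<lambda>m. mI m y) b @ tl c)" using rh_mult_lfirst[OF b c] y_def by simp
    also have "map (\<lambda>m. mI m y) b @ tl c = mI x y # R"
    proof -
      obtain tb where bb: "b = x # tb" using rhodes_hd_tl[OF b] x_def by metis
      show ?thesis unfolding R_def bb by simp
    qed
    finally show ?thesis by (simp add: lfirst_Cons)
  qed
  have "rh_mult a (rh_mult b c) = lfirst (map (\<lambda>m. mI m (mI x y)) a @ tl (rh_mult b c))"
    using rh_mult_lfirst[OF a bc] bcq by simp
  also have "\<dots> = lfirst (map (\<lambda>m. mI m (mI x y)) a @ filter (\<lambda>z. \<not> eqL z (mI x y)) R)"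
    using bcq lfirst_append_right by simp
  also have "\<dots> = lfirst (map (\<lambda>m. mI m (mI x y)) a @ R)"
  proof (rule lfirst_append_filter_member)
    have "None \<in> set a" using rhodesD[OF a] by (metis last_in_set)
    then show "mI x y \<in> set (map (\<lambda>m. mI m (mI x y)) a)" by force
  qed
  finally show ?thesis using lhs R_def by simp
qed


lemma rev_nth0: "xs \<noteq> [] \<Longrightarrow> rev xs ! 0 = last xs"
  by (simp add: hd_conv_nth[symmetric] hd_rev)

lemma rev_nth_last: "xs \<noteq> [] \<Longrightarrow> rev xs ! (length xs - 1) = hd xs"
  by (simp add: rev_nth hd_conv_nth)

lemma rev_rh_mult_nth_below:
  assumes "\<rho> \<in> rhodes" "\<sigma> \<in> rhodes" "i < length \<sigma> - 1"
  shows "rev (rh_mult \<rho> \<sigma>) ! i = rev \<sigma> ! i"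
  using rev_rh_mult_nth[OF assms(1,2)] assms(3) by simp

lemma rev_rh_mult_nth_eqL:
  assumes "\<rho> \<in> rhodes" "\<sigma> \<in> rhodes" "i < length \<sigma>"
  shows "eqL (rev (rh_mult \<rho> \<sigma>) ! i) (rev \<sigma> ! i)"
proof (cases "i = length \<sigma> - 1")
  case True
  then have "rev (rh_mult \<rho> \<sigma>) ! i = new_head \<rho> (hd \<sigma>)" using rev_rh_mult_nth[OF assms] by simp
  moreover have "rev \<sigma> ! i = hd \<sigma>" using True rev_nth_last[of \<sigma>] rhodesD[OF assms(2)] by simp
  ultimately show ?thesis using new_head_eqL[OF assms(1)] by simp
next
  case False then show ?thesis using rev_rh_mult_nth[OF assms] by simp
qed


definition agree :: "'a::semigroup_mult option list \<Rightarrow> 'a option list \<Rightarrow> nat \<Rightarrow> bool" where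
  "agree \<sigma> \<tau> r \<longleftrightarrow> r < length \<sigma> \<and> r < length \<tau> \<and> (\<forall>j<r. rev \<sigma> ! j = rev \<tau> ! j) \<and>
     eqL (rev \<sigma> ! r) (rev \<tau> ! r)"

definition wedge_idx :: "'a::semigroup_mult option list \<Rightarrow> 'a option list \<Rightarrow> nat" where
  "wedge_idx \<sigma> \<tau> = (GREATEST r. agree \<sigma> \<tau> r)"

lemma wedgeL_eq_nth: "wedgeL \<sigma> \<tau> = rev \<sigma> ! wedge_idx \<sigma> \<tau>"
  unfolding wedgeL_def wedge_idx_def agree_def by simp

lemma agree_sym: "agree \<sigma> \<tau> r = agree \<tau> \<sigma> r"
  unfolding agree_def using eqL_sym by metis

lemma wedge_idx_sym: "wedge_idx \<sigma> \<tau> = wedge_idx \<tau> \<sigma>"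
proof -
  have "agree \<sigma> \<tau> = agree \<tau> \<sigma>" by (rule ext) (rule agree_sym)
  then show ?thesis unfolding wedge_idx_def by simp
qed

lemma agree_0:
  assumes "\<sigma> \<in> rhodes" "\<tau> \<in> rhodes"
  shows "agree \<sigma> \<tau> 0"
proof -
  have "rev \<sigma> ! 0 = None" "rev \<tau> ! 0 = None" using rhodesD[OF assms(1)] rhodesD[OF assms(2)] rev_nth0 by metis+
  moreover have "0 < length \<sigma>" "0 < length \<tau>" using rhodesD[OF assms(1)] rhodesD[OF assms(2)] by auto
  ultimately show ?thesis unfolding agree_def by simp
qed

lemma agree_bounded: "agree \<sigma> \<tau> r \<Longrightarrow> r \<le> length \<sigma>"
  unfolding agree_def by simp

lemma agree_wedge_idx: "\<sigma> \<in> rhodes \<Longrightarrow> \<tau> \<in> rhodes \<Longrightarrow> agree \<sigma> \<tau> (wedge_idx \<sigma> \<tau>)"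
  unfolding wedge_idx_def using agree_0 agree_bounded by (rule GreatestI_nat)

lemma le_wedge_idx: "agree \<sigma> \<tau> r \<Longrightarrow> r \<le> wedge_idx \<sigma> \<tau>"
  unfolding wedge_idx_def by (rule Greatest_le_nat[OF _ agree_bounded])

lemma agree_below:
  assumes "agree \<sigma> \<tau> r'" "r < r'"
  shows "rev \<sigma> ! r = rev \<tau> ! r \<and> r < length \<sigma> - 1 \<and> r < length \<tau> - 1"
  using assms unfolding agree_def by auto

lemma agree_split:
  assumes "agree \<sigma> \<tau> r"
  obtains Xa Xb where "rev \<sigma> = take r (rev \<sigma>) @ rev \<sigma> ! r # Xa"
    "rev \<tau> = take r (rev \<sigma>) @ rev \<tau> ! r # Xb" "length (take r (rev \<sigma>)) = r"
proof -
  have r: "r < length \<sigma>" "r < length \<tau>" using assms unfolding agree_def by auto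
  have "take r (rev \<tau>) = take r (rev \<sigma>)"
    using assms unfolding agree_def by (intro nth_equalityI) auto
  moreover have "rev \<sigma> = take r (rev \<sigma>) @ rev \<sigma> ! r # drop (Suc r) (rev \<sigma>)"
    "rev \<tau> = take r (rev \<tau>) @ rev \<tau> ! r # drop (Suc r) (rev \<tau>)"
    using r by (auto intro: id_take_nth_drop)
  ultimately show ?thesis using that r by simp
qed

definition same_upto :: "'a::semigroup_mult option list \<Rightarrow> 'a option list \<Rightarrow> nat \<Rightarrow> bool" where
  "same_upto \<sigma> \<sigma>' r \<longleftrightarrow> r < length \<sigma> - 1 \<and> r < length \<sigma>' - 1 \<and> (\<forall>j\<le>r. rev \<sigma> ! j = rev \<sigma>' ! j)"

lemma same_upto_mult_left:
  "\<rho> \<in> rhodes \<Longrightarrow> \<sigma> \<in> rhodes \<Longrightarrow> \<sigma>' \<in> rhodes \<Longrightarrow> same_upto \<sigma> \<sigma>' r \<Longrightarrow>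
    rev (rh_mult \<rho> \<sigma>) ! r = rev (rh_mult \<rho> \<sigma>') ! r"
  unfolding same_upto_def using rev_rh_mult_nth_below[of \<rho> \<sigma> r] rev_rh_mult_nth_below[of \<rho> \<sigma>' r]
  by simp

lemma agree_same_upto:
  "agree \<sigma> \<tau> r' \<Longrightarrow> r < r' \<Longrightarrow> same_upto \<sigma> \<tau> r"
  unfolding agree_def same_upto_def by auto

lemma agree_same_upto_left:
  "same_upto \<sigma> \<sigma>' r \<Longrightarrow> agree \<sigma> \<tau> r \<Longrightarrow> agree \<sigma>' \<tau> r"
  unfolding agree_def same_upto_def by auto

text \<open>Left multiplication keeps all agreements (it only changes the head, within its
  $\mathcal L$-class, and can only lengthen chains).\<close>

lemma agree_mult_left:
  assumes p: "\<rho> \<in> rhodes" and s: "\<sigma> \<in> rhodes" and t: "\<tau> \<in> rhodes" and Q: "agree \<sigma> \<tau> r"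
  shows "agree (rh_mult \<rho> \<sigma>) (rh_mult \<rho> \<tau>) r"
proof -
  have r: "r < length \<sigma>" "r < length \<tau>" using Q unfolding agree_def by auto
  have "eqL (rev (rh_mult \<rho> \<sigma>) ! r) (rev (rh_mult \<rho> \<tau>) ! r)"
    using rev_rh_mult_nth_eqL[OF p s r(1)] rev_rh_mult_nth_eqL[OF p t r(2)] Q
    unfolding agree_def by (meson eqL_sym eqL_trans)
  moreover have "rev (rh_mult \<rho> \<sigma>) ! j = rev (rh_mult \<rho> \<tau>) ! j" if "j < r" for j
    using agree_same_upto[OF Q that] same_upto_mult_left[OF p s t] by (simp add: same_upto_def)
  ultimately show ?thesis
    using r rh_mult_len[OF p s] rh_mult_len[OF p t] unfolding agree_def by auto
qed

context
  fixes dummy :: "'a::semigroup_mult itself"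
  assumes fin: "J_above_finite TYPE('a)"
begin

lemma hJ_rev_strict:
  assumes "(\<sigma>::'a option list) \<in> rhodes" "i < j" "j < length \<sigma>"
  shows "hJ (rev \<sigma> ! i) < hJ (rev \<sigma> ! j)"
proof -
  have "ltL (\<sigma> ! (length \<sigma> - Suc j)) (\<sigma> ! (length \<sigma> - Suc i))"
    using sorted_wrt_nth_less rhodesD[OF assms(1)] assms(2,3) by fastforce
  then have "ltL (rev \<sigma> ! j) (rev \<sigma> ! i)" using assms(2,3) by (simp add: rev_nth)
  then show ?thesis using hJ_lt[OF fin] ltL_ltJ[OF fin] by blast
qed

text \<open>The defining condition of \<open>VMI\<close> only concerns the meet index of \<open>\<sigma>\<close> and
  \<open>\<tau>\<close>: left multiplication by \<open>\<rho>\<close> either keeps the meet index (and then the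
  hypothesis of the condition holds), or moves it strictly up the chain (and then the
  hypothesis fails, while the two entries at the old index coincide).\<close>

lemma V_condition:
  assumes s: "(\<sigma>::'a option list) \<in> rhodes" and t: "\<tau> \<in> rhodes" and p: "\<rho> \<in> rhodes"
  shows "(eqL (wedgeL (rh_mult \<rho> \<sigma>) (rh_mult \<rho> \<tau>)) (wedgeL \<sigma> \<tau>) \<longrightarrow>
      eqR (wedgeL (rh_mult \<rho> \<sigma>) (rh_mult \<rho> \<tau>)) (wedgeL (rh_mult \<rho> \<tau>) (rh_mult \<rho> \<sigma>)))
    \<longleftrightarrow> eqR (rev (rh_mult \<rho> \<sigma>) ! wedge_idx \<sigma> \<tau>) (rev (rh_mult \<rho> \<tau>) ! wedge_idx \<sigma> \<tau>)"
proof -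
  define r where "r = wedge_idx \<sigma> \<tau>"
  define \<sigma>' where "\<sigma>' = rh_mult \<rho> \<sigma>"
  define \<tau>' where "\<tau>' = rh_mult \<rho> \<tau>"
  define r' where "r' = wedge_idx \<sigma>' \<tau>'"
  have s': "\<sigma>' \<in> rhodes" and t': "\<tau>' \<in> rhodes" using rh_mult_closed p s t \<sigma>'_def \<tau>'_def by auto
  have Q: "agree \<sigma> \<tau> r" using agree_wedge_idx[OF s t] r_def by simp
  have Lr: "eqL (rev \<sigma>' ! r) (rev \<sigma> ! r)"
    using rev_rh_mult_nth_eqL[OF p s] Q \<sigma>'_def unfolding agree_def by simp
  have rr: "r \<le> r'" using le_wedge_idx[OF agree_mult_left[OF p s t Q]] r'_def \<sigma>'_def \<tau>'_def by simp
  have Q': "agree \<sigma>' \<tau>' r'" using agree_wedge_idx[OF s' t'] r'_def by simp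
  have w: "wedgeL \<sigma>' \<tau>' = rev \<sigma>' ! r'" "wedgeL \<tau>' \<sigma>' = rev \<tau>' ! r'" "wedgeL \<sigma> \<tau> = rev \<sigma> ! r"
    using wedgeL_eq_nth wedge_idx_sym r'_def r_def by metis+
  show ?thesis
  proof (cases "r' = r")
    case True
    then show ?thesis using w Lr \<sigma>'_def \<tau>'_def r_def by simp
  next
    case False
    then have lt: "r < r'" using rr by simp
    have "hJ (rev \<sigma>' ! r) < hJ (rev \<sigma>' ! r')"
      using hJ_rev_strict[OF s' lt] Q' unfolding agree_def by simp
    then have "\<not> eqL (rev \<sigma>' ! r') (rev \<sigma> ! r)" using hJ_eqL[OF fin] hJ_eqL[OF fin Lr] by fastforce
    then show ?thesis using w agree_below[OF Q' lt] \<sigma>'_def \<tau>'_def r_def by simp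
  qed
qed

lemma inV_iff:
  assumes "(\<sigma>::'a option list) \<in> rhodes" "\<tau> \<in> rhodes"
  shows "inV \<sigma> \<tau> \<longleftrightarrow>
    (\<forall>\<rho>\<in>rhodes. eqR (rev (rh_mult \<rho> \<sigma>) ! wedge_idx \<sigma> \<tau>) (rev (rh_mult \<rho> \<tau>) ! wedge_idx \<sigma> \<tau>))"
  unfolding inV_def using V_condition[OF assms] by blast

lemma Hfun_ne:
  assumes "(\<sigma>::'a option list) \<in> rhodes" "\<tau> \<in> rhodes" "\<sigma> \<noteq> \<tau>"
  shows "Hfun \<sigma> \<tau> = enat (2 * hJ (rev \<sigma> ! wedge_idx \<sigma> \<tau>) + (if inV \<sigma> \<tau> then 1 else 0))"
  unfolding Hfun_def VMI_def wedgeL_eq_nth using assms by simp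

end


section \<open>Lower bounds for \<open>Hfun\<close> by witnesses\<close>

text \<open>Working with arbitrary witnesses rather than with the meet
  index itself makes the ultrametric and congruence inequalities straightforward.\<close>

definition witness :: "nat \<Rightarrow> 'a::semigroup_mult option list \<Rightarrow> 'a option list \<Rightarrow> nat \<Rightarrow> bool" where
  "witness t \<sigma> \<tau> r \<longleftrightarrow> agree \<sigma> \<tau> r \<and> t \<le> 2 * hJ (rev \<sigma> ! r) + 1 \<and>
     (t \<le> 2 * hJ (rev \<sigma> ! r) \<or> (\<forall>\<rho>\<in>rhodes. eqR (rev (rh_mult \<rho> \<sigma>) ! r) (rev (rh_mult \<rho> \<tau>) ! r)))"

context
  fixes dummy :: "'a::semigroup_mult itself"
  assumes fin: "J_above_finite TYPE('a)"
begin

lemma Hfun_ge_iff: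
  assumes s: "(\<sigma>::'a option list) \<in> rhodes" and t: "\<tau> \<in> rhodes" and ne: "\<sigma> \<noteq> \<tau>"
  shows "enat k \<le> Hfun \<sigma> \<tau> \<longleftrightarrow> (\<exists>r. witness k \<sigma> \<tau> r)"
proof
  define r where "r = wedge_idx \<sigma> \<tau>"
  assume "enat k \<le> Hfun \<sigma> \<tau>"
  then have k: "k \<le> 2 * hJ (rev \<sigma> ! r) + (if inV \<sigma> \<tau> then 1 else 0)"
    using Hfun_ne[OF fin s t ne] r_def by simp
  have "witness k \<sigma> \<tau> r"
  proof (cases "inV \<sigma> \<tau>")
    case True
    then show ?thesis using k inV_iff[OF fin s t] agree_wedge_idx[OF s t] r_def
      unfolding witness_def by simp
  next
    case False
    then show ?thesis using k agree_wedge_idx[OF s t] r_def unfolding witness_def by simp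
  qed
  then show "\<exists>r. witness k \<sigma> \<tau> r" by blast
next
  define r' where "r' = wedge_idx \<sigma> \<tau>"
  assume "\<exists>r. witness k \<sigma> \<tau> r"
  then obtain r where G: "witness k \<sigma> \<tau> r" by blast
  then have rr: "r \<le> r'" using le_wedge_idx r'_def unfolding witness_def by blast
  have "k \<le> 2 * hJ (rev \<sigma> ! r') + (if inV \<sigma> \<tau> then 1 else 0)"
  proof (cases "r = r'")
    case True
    then show ?thesis using G inV_iff[OF fin s t] r'_def unfolding witness_def by auto
  next
    case False
    then have "hJ (rev \<sigma> ! r) < hJ (rev \<sigma> ! r')"
      using hJ_rev_strict[OF fin s, of r r'] rr agree_wedge_idx[OF s t] r'_def
      unfolding agree_def by simp
    then show ?thesis using G unfolding witness_def by auto
  qed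
  then show "enat k \<le> Hfun \<sigma> \<tau>" using Hfun_ne[OF fin s t ne] r'_def by simp
qed

lemma witness_same_upto_left:
  assumes "(\<sigma>::'a option list) \<in> rhodes" "\<sigma>' \<in> rhodes" "same_upto \<sigma> \<sigma>' r" "witness k \<sigma> \<tau> r"
  shows "witness k \<sigma>' \<tau> r"
  using assms same_upto_mult_left[OF _ assms(1,2,3)] agree_same_upto_left[OF assms(3)]
  unfolding witness_def same_upto_def by auto

lemma witness_same_upto_right:
  assumes "(\<tau>::'a option list) \<in> rhodes" "\<tau>' \<in> rhodes" "same_upto \<tau> \<tau>' r" "witness k \<sigma> \<tau> r"
  shows "witness k \<sigma> \<tau>' r"
proof -
  have "agree \<sigma> \<tau>' r" using assms(4) agree_same_upto_left[OF assms(3)] agree_sym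
    unfolding witness_def by blast
  then show ?thesis using assms same_upto_mult_left[OF _ assms(1,2,3)] unfolding witness_def by auto
qed

lemma witness_trans:
  assumes s: "(\<sigma>::'a option list) \<in> rhodes" and t: "\<tau> \<in> rhodes" and u: "\<upsilon> \<in> rhodes"
    and G1: "witness k \<sigma> \<tau> r1" and G2: "witness k \<tau> \<upsilon> r2"
  shows "witness k \<sigma> \<upsilon> (min r1 r2)"
proof -
  have Q1: "agree \<sigma> \<tau> r1" and Q2: "agree \<tau> \<upsilon> r2" using G1 G2 unfolding witness_def by auto
  consider "r1 = r2" | "r1 < r2" | "r2 < r1" by linarith
  then show ?thesis
  proof cases
    case 1
    have L: "eqL (rev \<sigma> ! r1) (rev \<tau> ! r1)" using Q1 unfolding agree_def by simp
    have "agree \<sigma> \<upsilon> r1" using Q1 Q2 1 unfolding agree_def by (auto intro: eqL_trans)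
    moreover have "k \<le> 2 * hJ (rev \<sigma> ! r1) \<or>
      (\<forall>\<rho>\<in>rhodes. eqR (rev (rh_mult \<rho> \<sigma>) ! r1) (rev (rh_mult \<rho> \<upsilon>) ! r1))"
      using G1 G2 1 hJ_eqL[OF fin L] unfolding witness_def by (metis eqR_trans)
    ultimately show ?thesis using G1 1 unfolding witness_def by simp
  next
    case 2
    then show ?thesis using witness_same_upto_right[OF t u agree_same_upto[OF Q2 2] G1] by simp
  next
    case 3
    have "same_upto \<tau> \<sigma> r2" using agree_same_upto[OF Q1 3] unfolding same_upto_def by auto
    then show ?thesis using witness_same_upto_left[OF t s _ G2] 3 by simp
  qed
qed

end


section \<open>Right multiplication preserves witnesses\<close>

text \<open>Write \<open>rev \<sigma> = P @ a # X\<close> (read from the identity end: \<open>P\<close> below \<open>a\<close>,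
  \<open>X\<close> above).\<close>

lemma rev_decomp: "rev \<sigma> = P @ a # X \<Longrightarrow> \<sigma> = rev X @ a # rev P"
  by (metis rev_append rev_rev_ident rev.simps(2) append.assoc append_Cons append_Nil)

lemma sorted_parts:
  assumes "\<sigma> \<in> rhodes" and "rev \<sigma> = P @ a # X"
  shows "(\<forall>x\<in>set X. ltL x a) \<and> (\<forall>p\<in>set P. ltL a p) \<and> sorted_wrt ltL (rev X)"
  using rhodesD[OF assms(1)] rev_decomp[OF assms(2)] by (simp add: sorted_wrt_append)

lemma filter_not_eqL_above:
  assumes "c \<in> set U" "\<And>u. u \<in> set U \<Longrightarrow> leL u c" "\<And>z. z \<in> set V \<Longrightarrow> leL c z"
  shows "filter (\<lambda>z. \<forall>u\<in>set U. \<not> eqL z u) V = filter (\<lambda>z. \<not> eqL z c) V"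
proof (rule filter_cong[OF refl])
  fix z assume "z \<in> set V"
  then have "leL c z" by (rule assms(3))
  then show "(\<forall>u\<in>set U. \<not> eqL z u) = (\<not> eqL z c)"
    using assms(1,2) leL_trans unfolding eqL_def by blast
qed

definition rh_prefix :: "'a::semigroup_mult option list \<Rightarrow> 'a option list \<Rightarrow> 'a option \<Rightarrow> 'a option list" where
  "rh_prefix m P a = rev (tl m) @
     rev (lfirst (filter (\<lambda>z. \<not> eqL z (mI a (hd m))) (map (\<lambda>z. mI z (hd m)) (rev P))))"

lemma rh_prefix_eqL:
  assumes "eqL (mI a (hd m)) (mI b (hd m))"
  shows "rh_prefix m P a = rh_prefix m P b"
proof -
  have "(\<lambda>z. \<not> eqL z (mI a (hd m))) = (\<lambda>z. \<not> eqL z (mI b (hd m)))"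
    using assms eqL_sym eqL_trans by blast
  then show ?thesis unfolding rh_prefix_def by simp
qed

lemma rev_rh_mult_decomp:
  assumes s: "\<sigma> \<in> rhodes" and m: "m \<in> rhodes" and d: "rev \<sigma> = P @ a # X"
  shows "rev (rh_mult \<sigma> m) =
    rh_prefix m P a @ rev (lfirst (map (\<lambda>z. mI z (hd m)) (rev X) @ [mI a (hd m)]))"
proof -
  define f where "f = (\<lambda>z. mI z (hd m))"
  define U where "U = map f (rev X) @ [f a]"
  have sp: "\<forall>x\<in>set X. leL x a" "\<forall>p\<in>set P. leL a p"
    using sorted_parts[OF s d] ltL_leL by auto
  have "filter (\<lambda>z. \<forall>u\<in>set U. \<not> eqL z u) (map f (rev P)) = filter (\<lambda>z. \<not> eqL z (f a)) (map f (rev P))"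
    by (rule filter_not_eqL_above) (use sp in \<open>auto simp: U_def f_def intro: leL_mult_right\<close>)
  moreover have "map f \<sigma> = U @ map f (rev P)" using rev_decomp[OF d] U_def by simp
  ultimately have "lfirst (map f \<sigma>) = lfirst U @ lfirst (filter (\<lambda>z. \<not> eqL z (f a)) (map f (rev P)))"
    by (simp add: lfirst_append)
  then show ?thesis using rh_mult_split[OF s m] unfolding rh_prefix_def U_def f_def by simp
qed

lemma last_lfirst_eqL:
  assumes "sorted_wrt leL U" "U \<noteq> []"
  shows "eqL (last (lfirst U)) (last U)"
proof -
  have "filter (\<lambda>z. eqL z (last U)) U \<noteq> []"
    using assms(2) by (auto simp: filter_empty_conv intro: bexI[of _ "last U"])
  then have "hd (filter (\<lambda>z. eqL z (last U)) U) \<in> set (filter (\<lambda>z. eqL z (last U)) U)"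
    by (rule list.set_sel(1))
  then show ?thesis using last_lfirst[OF assms] by simp
qed

lemma sorted_upper_part:
  assumes "\<sigma> \<in> rhodes" and "rev \<sigma> = P @ a # X"
  shows "sorted_wrt leL (map (\<lambda>z. mI z n) (rev X) @ [mI a n])"
proof -
  have "sorted_wrt leL (rev X @ [a])"
    using sorted_parts[OF assms]
    by (auto simp: sorted_wrt_append intro: ltL_leL sorted_wrt_mono_rel[of _ ltL])
  then have "sorted_wrt leL (map (\<lambda>z. mI z n) (rev X @ [a]))"
    unfolding sorted_wrt_map by (rule sorted_wrt_mono_rel[rotated]) (simp add: leL_mult_right)
  then show ?thesis by simp
qed

lemma agree_mult_right:
  assumes s: "\<sigma> \<in> rhodes" and t: "\<tau> \<in> rhodes" and m: "m \<in> rhodes"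
    and da: "rev \<sigma> = P @ a # Xa" and db: "rev \<tau> = P @ b # Xb" and ab: "eqL a b"
  shows "agree (rh_mult \<sigma> m) (rh_mult \<tau> m) (length (rh_prefix m P a))"
    and "eqL (rev (rh_mult \<sigma> m) ! length (rh_prefix m P a)) (mI a (hd m))"
proof -
  define f where "f = (\<lambda>z. mI z (hd m))"
  define Ua where "Ua = lfirst (map f (rev Xa) @ [f a])"
  define Ub where "Ub = lfirst (map f (rev Xb) @ [f b])"
  have fab: "eqL (f a) (f b)" using eqL_mult_right[OF ab] f_def by simp
  have ra: "rev (rh_mult \<sigma> m) = rh_prefix m P a @ rev Ua"
    using rev_rh_mult_decomp[OF s m da] Ua_def f_def by simp
  have rb: "rev (rh_mult \<tau> m) = rh_prefix m P a @ rev Ub"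
    using rev_rh_mult_decomp[OF t m db] rh_prefix_eqL[of a m b P] fab Ub_def f_def by simp
  have ne: "Ua \<noteq> []" "Ub \<noteq> []" using Ua_def Ub_def by auto
  have "eqL (last Ua) (f a)" "eqL (last Ub) (f b)"
    using last_lfirst_eqL[OF sorted_upper_part[OF s da]] last_lfirst_eqL[OF sorted_upper_part[OF t db]]
    unfolding Ua_def Ub_def f_def by auto
  then have L: "eqL (last Ua) (f a)" "eqL (last Ua) (last Ub)"
    using fab eqL_sym eqL_trans by blast+
  have at: "rev (rh_mult \<sigma> m) ! length (rh_prefix m P a) = last Ua"
    "rev (rh_mult \<tau> m) ! length (rh_prefix m P a) = last Ub"
    using ra rb ne by (simp_all add: nth_append rev_nth0)
  show "eqL (rev (rh_mult \<sigma> m) ! length (rh_prefix m P a)) (mI a (hd m))"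
    using at L f_def by simp
  have "length (rh_prefix m P a) < length (rh_mult \<sigma> m)" "length (rh_prefix m P a) < length (rh_mult \<tau> m)"
    using arg_cong[OF ra, of length] arg_cong[OF rb, of length] ne by simp_all
  then show "agree (rh_mult \<sigma> m) (rh_mult \<tau> m) (length (rh_prefix m P a))"
    unfolding agree_def using ra rb at L by (simp add: nth_append)
qed

context
  fixes dummy :: "'a::semigroup_mult itself"
  assumes fin: "J_above_finite TYPE('a)"
begin

lemma eqR_mult_right:
  assumes "eqL (e::'a option) a" "leJ a (mI a n)"
  shows "eqR e (mI e n)"
proof -
  have "leJ e a" using assms(1) unfolding eqL_def by (simp add: leL_leJ)
  moreover have "leJ (mI a n) (mI e n)"
    using eqL_mult_right[OF assms(1), of n] unfolding eqL_def by (simp add: leL_leJ)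
  ultimately have "leJ e (mI e n)" using assms(2) leJ_trans by blast
  then show ?thesis using leR_J_eqR[OF fin leR_self] eqR_sym by blast
qed

text \<open>If moreover \<open>a n\<close> is $\mathcal J$-equivalent to \<open>a\<close>, then \<open>a n\<close> lies strictly
  below the images of the entries above \<open>a\<close>, so it survives unchanged in \<open>\<sigma> m\<close>.\<close>

lemma rev_rh_mult_stable:
  assumes s: "(\<sigma>::'a option list) \<in> rhodes" and m: "m \<in> rhodes"
    and d: "rev \<sigma> = P @ a # X" and J: "leJ a (mI a (hd m))"
  shows "rev (rh_mult \<sigma> m) =
    rh_prefix m P a @ mI a (hd m) # rev (lfirst (map (\<lambda>z. mI z (hd m)) (rev X)))"
proof -
  define f where "f = (\<lambda>z. mI z (hd m))"
  have hfa: "hJ (f a) = hJ a"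
    using hJ_le_J[OF fin J leJ_self_right] hJ_mult_right[OF fin] f_def by (simp add: le_antisym)
  have "\<not> eqL (f a) z" if z: "z \<in> set (map f (rev X))" for z
  proof -
    obtain x where x: "x \<in> set X" "z = f x" using z by auto
    then have "hJ a < hJ x" using sorted_parts[OF s d] hJ_lt[OF fin] ltL_ltJ[OF fin] by blast
    moreover have "hJ x \<le> hJ z" using x hJ_mult_right[OF fin, of x] f_def by simp
    ultimately show ?thesis using hfa hJ_eqL[OF fin, of "f a" z] by linarith
  qed
  then have "lfirst (map f (rev X) @ [f a]) = lfirst (map f (rev X)) @ [f a]"
    by (simp add: lfirst_append lfirst_Cons)
  then show ?thesis using rev_rh_mult_decomp[OF s m d] f_def by simp
qed

lemma rh_mult_entry:
  assumes s: "(\<sigma>::'a option list) \<in> rhodes" and m: "m \<in> rhodes" and p: "\<rho> \<in> rhodes"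
    and d: "rev \<sigma> = P @ a # X" and J: "leJ a (mI a (hd m))"
  shows "rev (rh_mult \<rho> (rh_mult \<sigma> m)) ! length (rh_prefix m P a) = mI (rev (rh_mult \<rho> \<sigma>) ! length P) (hd m)"
proof -
  define f where "f = (\<lambda>z. mI z (hd m))"
  define Y where "Y = lfirst (map f (rev X))"
  define i where "i = length (rh_prefix m P a)"
  have r: "rev (rh_mult \<sigma> m) = rh_prefix m P a @ f a # rev Y"
    using rev_rh_mult_stable[OF s m d J] f_def Y_def by simp
  have len: "length (rh_mult \<sigma> m) = Suc (i + length Y)" using arg_cong[OF r, of length] i_def by simp
  have ls: "length \<sigma> = Suc (length P + length X)" using arg_cong[OF d, of length] by simp
  have "rev (rh_mult \<rho> (rh_mult \<sigma> m)) ! i = f (rev (rh_mult \<rho> \<sigma>) ! length P)"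
  proof (cases "X = []")
    case True
    have "hd \<sigma> = a" using rev_decomp[OF d] True by simp
    moreover have "rh_mult \<sigma> m = rev (rh_prefix m P a @ [f a])"
      using r True Y_def by (simp add: rev_swap)
    then have "hd (rh_mult \<sigma> m) = f a" by simp
    ultimately show ?thesis
      using rev_rh_mult_nth[OF p rh_mult_closed[OF s m], of i] rev_rh_mult_nth[OF p s, of "length P"]
        new_head_mult_right[OF fin p J] len ls True Y_def f_def by simp
  next
    case False
    then have "i < length (rh_mult \<sigma> m) - 1" "length P < length \<sigma> - 1" using len ls Y_def by simp_all
    then show ?thesis
      using rev_rh_mult_nth_below[OF p rh_mult_closed[OF s m]] rev_rh_mult_nth_below[OF p s]
        r d i_def f_def by (simp add: nth_append)
  qed
  then show ?thesis using i_def f_def by simp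
qed

lemma eqR_entries_mult_right:
  assumes s: "(\<sigma>::'a option list) \<in> rhodes" and t: "\<tau> \<in> rhodes" and m: "m \<in> rhodes"
    and da: "rev \<sigma> = P @ a # Xa" and db: "rev \<tau> = P @ b # Xb" and ab: "eqL a b"
    and Ja: "leJ a (mI a (hd m))" and Jb: "leJ b (mI b (hd m))"
    and R: "\<forall>\<rho>\<in>rhodes. eqR (rev (rh_mult \<rho> \<sigma>) ! length P) (rev (rh_mult \<rho> \<tau>) ! length P)"
    and p: "\<rho> \<in> rhodes"
  shows "eqR (rev (rh_mult \<rho> (rh_mult \<sigma> m)) ! length (rh_prefix m P a))
             (rev (rh_mult \<rho> (rh_mult \<tau> m)) ! length (rh_prefix m P a))"
proof -
  define n where "n = hd m"
  define ea eb where "ea = rev (rh_mult \<rho> \<sigma>) ! length P" "eb = rev (rh_mult \<rho> \<tau>) ! length P"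
  have "length P < length \<sigma>" "length P < length \<tau>"
    using arg_cong[OF da, of length] arg_cong[OF db, of length] by simp_all
  then have "eqL ea (rev \<sigma> ! length P)" "eqL eb (rev \<tau> ! length P)"
    using rev_rh_mult_nth_eqL[OF p s] rev_rh_mult_nth_eqL[OF p t] ea_eb_def by simp_all
  moreover have "rev \<sigma> ! length P = a" "rev \<tau> ! length P = b" using da db by simp_all
  ultimately have "eqL ea a" "eqL eb b" by simp_all
  then have a: "eqR (mI ea n) ea" and b: "eqR eb (mI eb n)"
    using eqR_mult_right Ja Jb eqR_sym n_def by blast+
  have "eqR ea eb" using R p ea_eb_def by simp
  then have "eqR (mI ea n) (mI eb n)" using eqR_trans[OF eqR_trans[OF a] b] by blast
  moreover have "length (rh_prefix m P a) = length (rh_prefix m P b)"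
    using rh_prefix_eqL[OF eqL_mult_right[OF ab, of "hd m"], of P] by simp
  ultimately show ?thesis
    using rh_mult_entry[OF s m p da Ja] rh_mult_entry[OF t m p db Jb] ea_eb_def n_def by simp
qed

text \<open>Either the height at the new position has grown, and
  the even bound suffices, or it is unchanged; then the $\mathcal R$-condition is transported
  by the previous two lemmas.\<close>

lemma witness_mult_right:
  assumes s: "(\<sigma>::'a option list) \<in> rhodes" and t: "\<tau> \<in> rhodes" and m: "m \<in> rhodes"
    and G: "witness k \<sigma> \<tau> r"
  shows "\<exists>i. witness k (rh_mult \<sigma> m) (rh_mult \<tau> m) i"
proof -
  have Q: "agree \<sigma> \<tau> r" using G unfolding witness_def by simp
  define P a b n where "P = take r (rev \<sigma>)" "a = rev \<sigma> ! r" "b = rev \<tau> ! r" "n = hd m"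
  obtain Xa Xb where da: "rev \<sigma> = P @ a # Xa" and db: "rev \<tau> = P @ b # Xb" and lP: "length P = r"
    using agree_split[OF Q] unfolding P_a_b_n_def by blast
  have ab: "eqL a b" using Q unfolding agree_def P_a_b_n_def by simp
  define i where "i = length (rh_prefix m P a)"
  have Q': "agree (rh_mult \<sigma> m) (rh_mult \<tau> m) i"
    and hi: "hJ (rev (rh_mult \<sigma> m) ! i) = hJ (mI a n)"
    using agree_mult_right[OF s t m da db ab] hJ_eqL[OF fin] i_def P_a_b_n_def by auto
  consider (low) "k \<le> 2 * hJ (mI a n)" | (high) "\<not> k \<le> 2 * hJ a" "hJ (mI a n) = hJ a"
    using G hJ_mult_right[OF fin, of a n] unfolding witness_def P_a_b_n_def by fastforce
  then show ?thesis
  proof cases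
    case low
    then show ?thesis using Q' hi unfolding witness_def by auto
  next
    case high
    have R: "\<forall>\<rho>\<in>rhodes. eqR (rev (rh_mult \<rho> \<sigma>) ! r) (rev (rh_mult \<rho> \<tau>) ! r)"
      using G high unfolding witness_def P_a_b_n_def by auto
    have Ja: "leJ a (mI a n)" using hJ_eq_leJ[OF fin leJ_self_right] high(2) by simp
    have "hJ (mI b n) = hJ b" using high(2) hJ_eqL[OF fin ab] hJ_eqL[OF fin eqL_mult_right[OF ab]] by simp
    then have Jb: "leJ b (mI b n)" using hJ_eq_leJ[OF fin leJ_self_right] by simp
    have "eqR (rev (rh_mult \<rho> (rh_mult \<sigma> m)) ! i) (rev (rh_mult \<rho> (rh_mult \<tau> m)) ! i)"
      if "\<rho> \<in> rhodes" for \<rho>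
      using eqR_entries_mult_right[OF s t m da db ab _ _ _ that] Ja Jb R lP i_def P_a_b_n_def by simp
    then show ?thesis using Q' hi high G unfolding witness_def P_a_b_n_def by auto
  qed
qed

end


lemma Hfun_diag: "Hfun (\<sigma>::'a::semigroup_mult option list) \<sigma> = Hfun (\<tau>::'a option list) \<tau>"
  unfolding Hfun_def by simp

lemma Hfun_lt:
  assumes "(\<sigma>::'a::semigroup_mult option list) \<noteq> \<tau>"
  shows "Hfun \<sigma> \<tau> < Hfun (\<rho>::'a option list) \<rho> \<and> (\<exists>k. Hfun \<sigma> \<tau> = enat k)"
proof -
  define S where "S = (SUP m::'a option. enat (hJ m))"
  define w where "w = wedgeL \<sigma> \<tau>"
  have hw: "enat (hJ w) \<le> S" unfolding S_def by (rule SUP_upper) simp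
  obtain c where c: "c \<le> 1" "Hfun \<sigma> \<tau> = enat (2 * hJ w + c)"
    using assms unfolding Hfun_def w_def
    by (cases "(\<sigma>, \<tau>) \<in> VMI") (auto intro: exI[of _ 1] exI[of _ 0])
  have "enat (2 * hJ w + c) < 2 * S + 2"
  proof (cases S)
    case (enat s)
    then have "hJ w \<le> s" using hw by simp
    then show ?thesis using enat c(1) by (simp add: numeral_eq_enat one_enat_def)
  qed (simp add: numeral_eq_enat)
  moreover have "Hfun \<rho> \<rho> = 2 * S + 2" unfolding Hfun_def S_def by simp
  ultimately show ?thesis using c by simp
qed

context
  fixes dummy :: "'a::semigroup_mult itself"
  assumes fin: "J_above_finite TYPE('a)"
begin

lemma Hfun_sym:
  assumes s: "(\<sigma>::'a option list) \<in> rhodes" and t: "\<tau> \<in> rhodes"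
  shows "Hfun \<sigma> \<tau> = Hfun \<tau> \<sigma>"
proof (cases "\<sigma> = \<tau>")
  case False
  define r where "r = wedge_idx \<sigma> \<tau>"
  have r2: "wedge_idx \<tau> \<sigma> = r" using wedge_idx_sym[of \<tau> \<sigma>] r_def by simp
  have "eqL (rev \<sigma> ! r) (rev \<tau> ! r)" using agree_wedge_idx[OF s t] r_def unfolding agree_def by simp
  then have h: "hJ (rev \<sigma> ! r) = hJ (rev \<tau> ! r)" by (rule hJ_eqL[OF fin])
  have "inV \<sigma> \<tau> = (\<forall>\<rho>\<in>rhodes. eqR (rev (rh_mult \<rho> \<sigma>) ! r) (rev (rh_mult \<rho> \<tau>) ! r))"
    "inV \<tau> \<sigma> = (\<forall>\<rho>\<in>rhodes. eqR (rev (rh_mult \<rho> \<tau>) ! r) (rev (rh_mult \<rho> \<sigma>) ! r))"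
    using inV_iff[OF fin s t] inV_iff[OF fin t s] r_def r2 by simp_all
  then have v: "inV \<sigma> \<tau> = inV \<tau> \<sigma>" using eqR_sym by blast
  have "\<tau> \<noteq> \<sigma>" using False by simp
  then show ?thesis using Hfun_ne[OF fin s t False] Hfun_ne[OF fin t s] h v r_def r2 by simp
qed simp

lemma Hfun_mult_right:
  assumes m': "(m'::'a option list) \<in> rhodes" and m'': "m'' \<in> rhodes" and m: "m \<in> rhodes"
  shows "Hfun m' m'' \<le> Hfun (rh_mult m' m) (rh_mult m'' m)"
proof (cases "m' = m'' \<or> rh_mult m' m = rh_mult m'' m")
  case True
  then show ?thesis using Hfun_lt[of m' m'' m'] Hfun_diag[of "rh_mult m' m" m'] by (cases "m' = m''") auto
next
  case False
  then have ne: "m' \<noteq> m''" "rh_mult m' m \<noteq> rh_mult m'' m" by auto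
  obtain k where k: "Hfun m' m'' = enat k" using Hfun_lt[OF ne(1)] by blast
  then obtain r where "witness k m' m'' r" using Hfun_ge_iff[OF fin m' m'' ne(1)] by auto
  then obtain i where "witness k (rh_mult m' m) (rh_mult m'' m) i"
    using witness_mult_right[OF fin m' m'' m] by blast
  then have "enat k \<le> Hfun (rh_mult m' m) (rh_mult m'' m)"
    using Hfun_ge_iff[OF fin rh_mult_closed[OF m' m] rh_mult_closed[OF m'' m] ne(2)] by blast
  then show ?thesis using k by simp
qed

lemma Hfun_ultrametric:
  assumes m: "(m::'a option list) \<in> rhodes" and m': "m' \<in> rhodes" and m'': "m'' \<in> rhodes"
  shows "min (Hfun m m') (Hfun m' m'') \<le> Hfun m m''"
proof (cases "m = m' \<or> m' = m'' \<or> m = m''")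
  case True
  moreover have "Hfun m m' \<le> Hfun m m" using Hfun_lt[of m m' m] by (cases "m = m'") auto
  ultimately show ?thesis by (auto simp: min_le_iff_disj)
next
  case False
  then have ne: "m \<noteq> m'" "m' \<noteq> m''" "m \<noteq> m''" by auto
  obtain k1 where k1: "Hfun m m' = enat k1" using Hfun_lt[OF ne(1)] by blast
  obtain k2 where k2: "Hfun m' m'' = enat k2" using Hfun_lt[OF ne(2)] by blast
  define k where "k = min k1 k2"
  have "enat k \<le> Hfun m m'" "enat k \<le> Hfun m' m''" using k1 k2 k_def by simp_all
  then obtain r1 r2 where r1: "witness k m m' r1" and r2: "witness k m' m'' r2"
    using Hfun_ge_iff[OF fin m m' ne(1)] Hfun_ge_iff[OF fin m' m'' ne(2)] by blast
  have "witness k m m'' (min r1 r2)" by (rule witness_trans[OF fin m m' m'' r1 r2])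
  then have "enat k \<le> Hfun m m''" using Hfun_ge_iff[OF fin m m'' ne(3)] by blast
  then show ?thesis using k1 k2 k_def by simp
qed

theorem Hfun_strict_length_function:
  "strict_length_function (rhodes :: 'a option list set) rh_mult Hfun"
  unfolding strict_length_function_def length_function_def
proof (intro conjI ballI impI)
  fix m m' m'' :: "'a option list"
  assume m: "m \<in> rhodes" and m': "m' \<in> rhodes" and m'': "m'' \<in> rhodes"
  show "Hfun m m' = Hfun m' m" by (rule Hfun_sym[OF m m'])
  show "Hfun m' m'' \<le> Hfun m m"
    using Hfun_lt[of m' m'' m] Hfun_diag[of m' m] by (cases "m' = m''") auto
  show "Hfun m' m'' \<le> Hfun (rh_mult m' m) (rh_mult m'' m)" by (rule Hfun_mult_right[OF m' m'' m])
  show "min (Hfun m m') (Hfun m' m'') \<le> Hfun m m''" by (rule Hfun_ultrametric[OF m m' m''])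
  assume "Hfun m' m'' = Hfun m m"
  then show "m' = m''" using Hfun_lt[of m' m'' m] by (cases "m' = m''") auto
qed

end


section \<open>Strict length functions and elliptic trees\<close>

lemma enat_inf_all: "(\<And>i. enat i \<le> x) \<Longrightarrow> x = \<infinity>"
proof (cases x)
  case (enat n)
  assume h: "\<And>i. enat i \<le> x"
  then have "enat (Suc n) \<le> enat n" using enat by simp
  then show ?thesis by simp
qed simp

text \<open>The supremum of the natural numbers below \<open>x\<close> is \<open>x\<close>; this turns \<open>Dchi\<close> into a
  depth.\<close>

lemma Sup_enat_le: "Sup {enat i | i. enat i \<le> x} = x"
proof (rule antisym)
  show "Sup {enat i | i. enat i \<le> x} \<le> x" by (rule Sup_least) auto
next
  show "x \<le> Sup {enat i | i. enat i \<le> x}"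
  proof (cases x)
    case (enat n)
    then show ?thesis by (intro Sup_upper) auto
  next
    case infinity
    have "enat i \<le> Sup {enat i | i. enat i \<le> x}" for i
      using infinity by (intro Sup_upper) auto
    then have "Sup {enat i | i. enat i \<le> x} = \<infinity>"
      by (rule enat_inf_all)
    then show ?thesis using infinity by simp
  qed
qed

lemma enat_all_le: "(\<And>i. enat i \<le> N \<Longrightarrow> enat i \<le> x) \<Longrightarrow> x \<le> N \<Longrightarrow> x = N"
proof -
  assume h: "\<And>i. enat i \<le> N \<Longrightarrow> enat i \<le> x" and xN: "x \<le> N"
  show "x = N"
  proof (cases N)
    case (enat n) then show ?thesis using h[of n] xN by simp
  next
    case infinity
    then have "\<And>i. enat i \<le> x" using h by simp
    then have "x = \<infinity>" by (rule enat_inf_all)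
    then show ?thesis using infinity by simp
  qed
qed

context
  fixes S :: "'s set" and f :: "'s \<Rightarrow> 's \<Rightarrow> 's" and D :: "'s \<Rightarrow> 's \<Rightarrow> enat"
  assumes slf: "strict_length_function S f D"
begin

lemma lf_props: "m \<in> S \<Longrightarrow> m' \<in> S \<Longrightarrow> m'' \<in> S \<Longrightarrow>
      D m m' = D m' m \<and> D m' m'' \<le> D m m \<and> D m' m'' \<le> D (f m' m) (f m'' m) \<and>
      min (D m m') (D m' m'') \<le> D m m''"
proof -
  assume a: "m \<in> S" "m' \<in> S" "m'' \<in> S"
  have "length_function S f D" using slf unfolding strict_length_function_def by simp
  then show ?thesis unfolding length_function_def using a by simp
qed

lemma lf_sym: "a \<in> S \<Longrightarrow> b \<in> S \<Longrightarrow> D a b = D b a"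
  using lf_props[of a b b] by simp

lemma lf_le_diag: "a \<in> S \<Longrightarrow> b \<in> S \<Longrightarrow> c \<in> S \<Longrightarrow> D a b \<le> D c c"
  using lf_props[of c a b] by simp

lemma lf_diag: "a \<in> S \<Longrightarrow> c \<in> S \<Longrightarrow> D a a = D c c"
  using lf_le_diag[of a a c] lf_le_diag[of c c a] by simp

lemma lf_trans: "a \<in> S \<Longrightarrow> b \<in> S \<Longrightarrow> c \<in> S \<Longrightarrow> x \<le> D a b \<Longrightarrow> x \<le> D b c \<Longrightarrow> x \<le> D a c"
proof -
  assume a: "a \<in> S" "b \<in> S" "c \<in> S" "x \<le> D a b" "x \<le> D b c"
  have "min (D a b) (D b c) \<le> D a c" using lf_props[OF a(1-3)] by blast
  moreover have "x \<le> min (D a b) (D b c)" using a(4,5) by simp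
  ultimately show ?thesis by (rule order_trans[rotated])
qed

lemma lf_mult_right: "a \<in> S \<Longrightarrow> b \<in> S \<Longrightarrow> m \<in> S \<Longrightarrow> x \<le> D a b \<Longrightarrow> x \<le> D (f a m) (f b m)"
proof -
  assume a: "a \<in> S" "b \<in> S" "m \<in> S" "x \<le> D a b"
  have "D a b \<le> D (f a m) (f b m)" using lf_props[OF a(3) a(1) a(2)] by simp
  then show ?thesis using a(4) by simp
qed

lemma lf_strict: "a \<in> S \<Longrightarrow> b \<in> S \<Longrightarrow> c \<in> S \<Longrightarrow> D a b = D c c \<Longrightarrow> a = b"
proof -
  assume a: "a \<in> S" "b \<in> S" "c \<in> S" "D a b = D c c"
  have "\<forall>m\<in>S. \<forall>m'\<in>S. \<forall>m''\<in>S. D m' m'' = D m m \<longrightarrow> m' = m''"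
    using slf unfolding strict_length_function_def by simp
  then show ?thesis using a by blast
qed

end


definition monoid_on :: "'s set \<Rightarrow> ('s \<Rightarrow> 's \<Rightarrow> 's) \<Rightarrow> 's \<Rightarrow> bool" where
  "monoid_on S f e \<longleftrightarrow> e \<in> S \<and> (\<forall>a\<in>S. \<forall>b\<in>S. f a b \<in> S) \<and>
     (\<forall>a\<in>S. \<forall>b\<in>S. \<forall>c\<in>S. f (f a b) c = f a (f b c)) \<and> (\<forall>a\<in>S. f e a = a \<and> f a e = a)"

lemma enat_le_sub: "enat i \<le> M \<Longrightarrow> enat (i - n) \<le> M"
  by (rule order_trans[of _ "enat i"]) simp_all

text \<open>The tree of balls: the vertices at depth \<open>i \<le> D e e\<close> are the balls
  \<open>{s'. i \<le> D s s'}\<close> (an equivalence class, by the ultrametric inequality), the parent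
  of a ball is the ball of radius one less around any of its points, the ray runs through the
  balls around \<open>e\<close>, and \<open>S\<close> acts by right multiplication of centres.\<close>

definition ball :: "'s set \<Rightarrow> ('s \<Rightarrow> 's \<Rightarrow> enat) \<Rightarrow> nat \<Rightarrow> 's \<Rightarrow> 's set" where
  "ball S D i s = {s' \<in> S. enat i \<le> D s s'}"

definition tree_of :: "'s set \<Rightarrow> ('s \<Rightarrow> 's \<Rightarrow> 's) \<Rightarrow> ('s \<Rightarrow> 's \<Rightarrow> enat) \<Rightarrow> 's \<Rightarrow> (nat \<times> 's set, 's) stree" where
  "tree_of S f D e = \<lparr>Vt = {(i, ball S D i s) | i s. enat i \<le> D e e \<and> s \<in> S}, rt = (0, S),
     par = (\<lambda>(i, C). (i - 1, ball S D (i - 1) (SOME c. c \<in> C))),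
     ray = (\<lambda>i. (i, ball S D i e)), rlen = D e e,
     act = (\<lambda>(i, C) s. (i, ball S D i (f (SOME c. c \<in> C) s)))\<rparr>"

context
  fixes S :: "'s set" and f :: "'s \<Rightarrow> 's \<Rightarrow> 's" and D :: "'s \<Rightarrow> 's \<Rightarrow> enat" and e :: 's
  assumes slf: "strict_length_function S f D"
    and eS: "e \<in> S" and cl: "\<And>a b. a \<in> S \<Longrightarrow> b \<in> S \<Longrightarrow> f a b \<in> S"
    and asc: "\<And>a b c. a \<in> S \<Longrightarrow> b \<in> S \<Longrightarrow> c \<in> S \<Longrightarrow> f (f a b) c = f a (f b c)"
    and lu: "\<And>a. a \<in> S \<Longrightarrow> f e a = a"
begin

lemma D_diag: "a \<in> S \<Longrightarrow> D a a = D e e" using lf_diag[OF slf _ eS] by simp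
lemma D_le_max: "a \<in> S \<Longrightarrow> b \<in> S \<Longrightarrow> D a b \<le> D e e" using lf_le_diag[OF slf _ _ eS] by simp

lemma ball_center: "s \<in> S \<Longrightarrow> enat i \<le> D e e \<Longrightarrow> s \<in> ball S D i s"
  unfolding ball_def using D_diag by simp

lemma ball_eq_iff: "s \<in> S \<Longrightarrow> s' \<in> S \<Longrightarrow> enat i \<le> D e e \<Longrightarrow> ball S D i s = ball S D i s' \<longleftrightarrow> enat i \<le> D s s'"
proof
  assume a: "s \<in> S" "s' \<in> S" "enat i \<le> D e e" "ball S D i s = ball S D i s'"
  then have "s' \<in> ball S D i s" using ball_center by simp
  then show "enat i \<le> D s s'" unfolding ball_def by simp
next
  assume a: "s \<in> S" "s' \<in> S" "enat i \<le> D e e" "enat i \<le> D s s'"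
  show "ball S D i s = ball S D i s'"
    unfolding ball_def
  proof (intro Collect_cong conj_cong refl)
    fix x assume x: "x \<in> S"
    show "(enat i \<le> D s x) = (enat i \<le> D s' x)"
    proof
      assume "enat i \<le> D s x"
      moreover have "enat i \<le> D s' s" using a lf_sym[OF slf] by simp
      ultimately show "enat i \<le> D s' x" using lf_trans[OF slf a(2) a(1) x] by simp
    next
      assume "enat i \<le> D s' x"
      then show "enat i \<le> D s x" using lf_trans[OF slf a(1) a(2) x] a(4) by simp
    qed
  qed
qed

lemma ball_0: "ball S D 0 s = S" unfolding ball_def by (simp add: zero_enat_def[symmetric])

lemma some_ball:
  assumes "s \<in> S" "enat i \<le> D e e"
  shows "(SOME c. c \<in> ball S D i s) \<in> S \<and> ball S D i (SOME c. c \<in> ball S D i s) = ball S D i s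
         \<and> enat i \<le> D s (SOME c. c \<in> ball S D i s)"
proof -
  have "s \<in> ball S D i s" using ball_center assms by simp
  then have c: "(SOME c. c \<in> ball S D i s) \<in> ball S D i s" by (rule someI)
  then have cS: "(SOME c. c \<in> ball S D i s) \<in> S" and le: "enat i \<le> D s (SOME c. c \<in> ball S D i s)"
    unfolding ball_def by auto
  then show ?thesis using ball_eq_iff[OF assms(1) cS assms(2)] by simp
qed

lemma tree_of_simps: "Vt (tree_of S f D e) = {(i, ball S D i s) | i s. enat i \<le> D e e \<and> s \<in> S}" "rt (tree_of S f D e) = (0, S)"
  "ray (tree_of S f D e) i = (i, ball S D i e)" "rlen (tree_of S f D e) = D e e"
  by (simp_all add: tree_of_def)

lemma tree_of_par: "s \<in> S \<Longrightarrow> enat i \<le> D e e \<Longrightarrow> par (tree_of S f D e) (i, ball S D i s) = (i - 1, ball S D (i - 1) s)"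
proof -
  assume a: "s \<in> S" "enat i \<le> D e e"
  define c where "c = (SOME c. c \<in> ball S D i s)"
  have c: "c \<in> S" "enat i \<le> D s c" using some_ball[OF a] c_def by auto
  have i1: "enat (i - 1) \<le> D e e" using a(2) by (rule enat_le_sub)
  have "enat (i - 1) \<le> D s c" using c(2) by (rule enat_le_sub)
  then have "ball S D (i - 1) c = ball S D (i - 1) s" using ball_eq_iff[OF a(1) c(1) i1] by simp
  then show ?thesis by (simp add: tree_of_def c_def)
qed

lemma tree_of_act: "s \<in> S \<Longrightarrow> t \<in> S \<Longrightarrow> enat i \<le> D e e \<Longrightarrow> act (tree_of S f D e) (i, ball S D i s) t = (i, ball S D i (f s t))"
proof -
  assume a: "s \<in> S" "t \<in> S" "enat i \<le> D e e"
  define c where "c = (SOME c. c \<in> ball S D i s)"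
  have c: "c \<in> S" "enat i \<le> D s c" using some_ball[OF a(1,3)] c_def by auto
  have "enat i \<le> D (f s t) (f c t)" using lf_mult_right[OF slf a(1) c(1) a(2) c(2)] .
  then have "ball S D i (f c t) = ball S D i (f s t)"
    using ball_eq_iff[OF cl[OF a(1,2)] cl[OF c(1) a(2)] a(3)] by simp
  then show ?thesis by (simp add: tree_of_def c_def)
qed

lemma tree_of_par_pow: "s \<in> S \<Longrightarrow> enat i \<le> D e e \<Longrightarrow> n \<le> i \<Longrightarrow> (par (tree_of S f D e) ^^ n) (i, ball S D i s) = (i - n, ball S D (i - n) s)"
proof (induction n)
  case 0 then show ?case by simp
next
  case (Suc n)
  have "enat (i - n) \<le> D e e" using Suc.prems(2) by (rule enat_le_sub)
  then have "par (tree_of S f D e) (i - n, ball S D (i - n) s) = (i - n - 1, ball S D (i - n - 1) s)"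
    using tree_of_par Suc.prems(1) by blast
  then show ?case using Suc by simp
qed

lemma tree_of_rt: "(0, ball S D 0 s) = rt (tree_of S f D e)" using tree_of_simps ball_0 by simp

lemma tree_of_depth: "s \<in> S \<Longrightarrow> enat i \<le> D e e \<Longrightarrow> depth (tree_of S f D e) (i, ball S D i s) = i"
  unfolding depth_def
proof (rule Least_equality)
  assume a: "s \<in> S" "enat i \<le> D e e"
  show "(par (tree_of S f D e) ^^ i) (i, ball S D i s) = rt (tree_of S f D e)" using tree_of_par_pow[OF a] tree_of_rt by simp
  fix n assume n: "(par (tree_of S f D e) ^^ n) (i, ball S D i s) = rt (tree_of S f D e)"
  show "i \<le> n"
  proof (rule ccontr)
    assume "\<not> i \<le> n"
    then have "(par (tree_of S f D e) ^^ n) (i, ball S D i s) = (i - n, ball S D (i - n) s)" using tree_of_par_pow[OF a] by simp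
    then show False using n \<open>\<not> i \<le> n\<close> tree_of_simps by simp
  qed
qed

lemma tree_of_Vt_iff: "v \<in> Vt (tree_of S f D e) \<longleftrightarrow> (\<exists>i s. v = (i, ball S D i s) \<and> enat i \<le> D e e \<and> s \<in> S)"
  using tree_of_simps by auto

lemma tree_of_rt_Vt: "rt (tree_of S f D e) \<in> Vt (tree_of S f D e)" using tree_of_Vt_iff tree_of_rt eS by (metis zero_enat_def zero_le)

lemma tree_of_not_rt: "v = (i, ball S D i s) \<Longrightarrow> v \<noteq> rt (tree_of S f D e) \<Longrightarrow> i \<noteq> 0"
proof
  assume "v = (i, ball S D i s)" "v \<noteq> rt (tree_of S f D e)" "i = 0"
  then show False using tree_of_rt[of s] by simp
qed

lemma tree_of_rooted: "rooted_tree (tree_of S f D e)"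
  unfolding rooted_tree_def
proof (intro conjI ballI impI)
  show "rt (tree_of S f D e) \<in> Vt (tree_of S f D e)" by (rule tree_of_rt_Vt)
  fix v assume v: "v \<in> Vt (tree_of S f D e)"
  then obtain i s where isx: "v = (i, ball S D i s)" "enat i \<le> D e e" "s \<in> S" using tree_of_Vt_iff by auto
  show "\<exists>n. (par (tree_of S f D e) ^^ n) v = rt (tree_of S f D e)" using tree_of_par_pow[OF isx(3) isx(2), of i] isx(1) tree_of_rt by auto
  assume "v \<noteq> rt (tree_of S f D e)"
  have "enat (i - 1) \<le> D e e" using isx(2) by (rule enat_le_sub)
  then show "par (tree_of S f D e) v \<in> Vt (tree_of S f D e)" using tree_of_par[OF isx(3) isx(2)] isx tree_of_Vt_iff by auto
qed


lemma tree_of_max_ray: "is_max_ray (tree_of S f D e) (ray (tree_of S f D e)) (rlen (tree_of S f D e))"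
  unfolding is_max_ray_def is_ray_def
proof (intro conjI allI impI)
  show "ray (tree_of S f D e) 0 = rt (tree_of S f D e)" using tree_of_simps tree_of_rt[of e] by simp
  fix i
  show "enat i \<le> rlen (tree_of S f D e) \<Longrightarrow> ray (tree_of S f D e) i \<in> Vt (tree_of S f D e)" using tree_of_simps eS by auto
  assume h: "enat (Suc i) \<le> rlen (tree_of S f D e)"
  show "ray (tree_of S f D e) (Suc i) \<noteq> rt (tree_of S f D e)" using tree_of_simps by simp
  show "par (tree_of S f D e) (ray (tree_of S f D e) (Suc i)) = ray (tree_of S f D e) i" using tree_of_par[OF eS] h tree_of_simps by simp
next
  fix n assume n: "rlen (tree_of S f D e) = enat n"
  show "\<not> (\<exists>w\<in>Vt (tree_of S f D e). w \<noteq> rt (tree_of S f D e) \<and> par (tree_of S f D e) w = ray (tree_of S f D e) n)"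
  proof
    assume "\<exists>w\<in>Vt (tree_of S f D e). w \<noteq> rt (tree_of S f D e) \<and> par (tree_of S f D e) w = ray (tree_of S f D e) n"
    then obtain w where w: "w \<in> Vt (tree_of S f D e)" "w \<noteq> rt (tree_of S f D e)" "par (tree_of S f D e) w = ray (tree_of S f D e) n" by blast
    then obtain j s where js: "w = (j, ball S D j s)" "enat j \<le> D e e" "s \<in> S" using tree_of_Vt_iff by auto
    have "j \<noteq> 0" using tree_of_not_rt[OF js(1) w(2)] .
    moreover have "par (tree_of S f D e) w = (j - 1, ball S D (j - 1) s)" using tree_of_par[OF js(3) js(2)] js(1) by simp
    ultimately have "j = Suc n" using w(3) tree_of_simps by simp
    then show False using js(2) n tree_of_simps by simp
  qed
qed

lemma tree_of_ray_fst:
  assumes r: "is_ray (tree_of S f D e) \<beta> l" and i: "enat i \<le> l"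
  shows "fst (\<beta> i) = i"
  using i
proof (induction i)
  case 0 then show ?case using r tree_of_simps unfolding is_ray_def by simp
next
  case (Suc i)
  have "\<beta> (Suc i) \<in> Vt (tree_of S f D e)" using r Suc.prems unfolding is_ray_def by blast
  then obtain j s where js: "\<beta> (Suc i) = (j, ball S D j s)" "enat j \<le> D e e" "s \<in> S" using tree_of_Vt_iff by auto
  have nr: "\<beta> (Suc i) \<noteq> rt (tree_of S f D e)" and p: "par (tree_of S f D e) (\<beta> (Suc i)) = \<beta> i" using r Suc.prems unfolding is_ray_def by auto
  have "j \<noteq> 0" using tree_of_not_rt[OF js(1) nr] .
  moreover have "enat i \<le> l" by (rule order_trans[OF _ Suc.prems]) simp
  then have "fst (\<beta> i) = i" using Suc.IH by simp
  moreover have "par (tree_of S f D e) (\<beta> (Suc i)) = (j - 1, ball S D (j - 1) s)" using tree_of_par[OF js(3) js(2)] js(1) by simp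
  ultimately have "j - 1 = i" using p js(1) by (metis fst_conv)
  then show ?case using js(1) \<open>j \<noteq> 0\<close> by simp
qed

lemma tree_of_max_ray_len:
  assumes m: "is_max_ray (tree_of S f D e) \<beta> l"
  shows "l = D e e"
proof -
  have r: "is_ray (tree_of S f D e) \<beta> l" using m unfolding is_max_ray_def by simp
  have le: "enat i \<le> D e e" if "enat i \<le> l" for i
  proof -
    have "\<beta> i \<in> Vt (tree_of S f D e)" using r that unfolding is_ray_def by blast
    then obtain j s where js: "\<beta> i = (j, ball S D j s)" "enat j \<le> D e e" "s \<in> S" using tree_of_Vt_iff by auto
    then show ?thesis using tree_of_ray_fst[OF r that] by simp
  qed
  show ?thesis
  proof (cases l)
    case infinity
    then have "\<And>i. enat i \<le> D e e" using le by simp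
    then show ?thesis using infinity enat_inf_all by metis
  next
    case (enat n)
    have nN: "enat n \<le> D e e" using le enat by simp
    show ?thesis
    proof (rule ccontr)
      assume "l \<noteq> D e e"
      then have "enat (Suc n) \<le> D e e" using nN enat by (cases "D e e") auto
      have "\<beta> n \<in> Vt (tree_of S f D e)" using r enat unfolding is_ray_def by simp
      then obtain j s where js: "\<beta> n = (j, ball S D j s)" "enat j \<le> D e e" "s \<in> S" using tree_of_Vt_iff by auto
      have jn: "j = n" using tree_of_ray_fst[OF r, of n] enat js(1) by simp
      define w where "w = (Suc n, ball S D (Suc n) s)"
      have "w \<in> Vt (tree_of S f D e)" using w_def \<open>enat (Suc n) \<le> D e e\<close> js(3) tree_of_Vt_iff by auto
      moreover have "w \<noteq> rt (tree_of S f D e)" using w_def tree_of_simps by simp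
      moreover have "par (tree_of S f D e) w = \<beta> n" using tree_of_par[OF js(3) \<open>enat (Suc n) \<le> D e e\<close>] w_def js(1) jn by simp
      ultimately show False using m enat unfolding is_max_ray_def by blast
    qed
  qed
qed

lemma tree_of_uniform: "uniform_tree (tree_of S f D e)"
  unfolding uniform_tree_def using tree_of_max_ray_len by metis

lemma tree_of_tdist:
  assumes v: "v \<in> Vt (tree_of S f D e)" and w: "w \<in> Vt (tree_of S f D e)" and t: "t \<in> S"
  shows "tdist (tree_of S f D e) (act (tree_of S f D e) v t) (act (tree_of S f D e) w t) \<le> tdist (tree_of S f D e) v w"
proof -
  obtain i a where ia: "v = (i, ball S D i a)" "enat i \<le> D e e" "a \<in> S" using v tree_of_Vt_iff by auto
  obtain j b where jb: "w = (j, ball S D j b)" "enat j \<le> D e e" "b \<in> S" using w tree_of_Vt_iff by auto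
  have av: "act (tree_of S f D e) v t = (i, ball S D i (f a t))" using tree_of_act[OF ia(3) t ia(2)] ia(1) by simp
  have aw: "act (tree_of S f D e) w t = (j, ball S D j (f b t))" using tree_of_act[OF jb(3) t jb(2)] jb(1) by simp
  have dv: "depth (tree_of S f D e) v = i" "depth (tree_of S f D e) (act (tree_of S f D e) v t) = i" using tree_of_depth ia av cl[OF ia(3) t] by auto
  have dw: "depth (tree_of S f D e) w = j" "depth (tree_of S f D e) (act (tree_of S f D e) w t) = j" using tree_of_depth jb aw cl[OF jb(3) t] by auto
  define P where "P = (\<lambda>n. \<exists>k l. k + l = n \<and> k \<le> depth (tree_of S f D e) v \<and> l \<le> depth (tree_of S f D e) w \<and> (par (tree_of S f D e) ^^ k) v = (par (tree_of S f D e) ^^ l) w)"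
  define P' where "P' = (\<lambda>n. \<exists>k l. k + l = n \<and> k \<le> depth (tree_of S f D e) (act (tree_of S f D e) v t) \<and> l \<le> depth (tree_of S f D e) (act (tree_of S f D e) w t) \<and>
      (par (tree_of S f D e) ^^ k) (act (tree_of S f D e) v t) = (par (tree_of S f D e) ^^ l) (act (tree_of S f D e) w t))"
  have PP: "P' n" if Pn: "P n" for n
  proof -
    obtain k l where kl: "k + l = n" "k \<le> i" "l \<le> j" "(par (tree_of S f D e) ^^ k) v = (par (tree_of S f D e) ^^ l) w"
      using Pn unfolding P_def dv dw by auto
    have e1: "(par (tree_of S f D e) ^^ k) v = (i - k, ball S D (i - k) a)" using tree_of_par_pow[OF ia(3) ia(2) kl(2)] ia(1) by simp
    have e2: "(par (tree_of S f D e) ^^ l) w = (j - l, ball S D (j - l) b)" using tree_of_par_pow[OF jb(3) jb(2) kl(3)] jb(1) by simp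
    have "(i - k, ball S D (i - k) a) = (j - l, ball S D (j - l) b)" using kl(4)[unfolded e1 e2] .
    then have dd: "i - k = j - l \<and> ball S D (i - k) a = ball S D (j - l) b" by (rule Pair_inject) blast
    have d: "i - k = j - l" "ball S D (i - k) a = ball S D (i - k) b"
      using conjunct1[OF dd] apply simp
      using conjunct1[OF dd] conjunct2[OF dd] by simp
    have dN: "enat (i - k) \<le> D e e" using ia(2) by (rule enat_le_sub)
    have "enat (i - k) \<le> D a b" using ball_eq_iff[OF ia(3) jb(3) dN] d(2) by simp
    then have "enat (i - k) \<le> D (f a t) (f b t)" using lf_mult_right[OF slf ia(3) jb(3) t] by simp
    then have "ball S D (i - k) (f a t) = ball S D (i - k) (f b t)"
      using ball_eq_iff[OF cl[OF ia(3) t] cl[OF jb(3) t] dN] by simp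
    then have "(par (tree_of S f D e) ^^ k) (act (tree_of S f D e) v t) = (par (tree_of S f D e) ^^ l) (act (tree_of S f D e) w t)"
      using tree_of_par_pow[OF cl[OF ia(3) t] ia(2) kl(2)] tree_of_par_pow[OF cl[OF jb(3) t] jb(2) kl(3)] av aw d(1) by simp
    then show ?thesis unfolding P'_def using kl dv dw by auto
  qed
  have "P (i + j)"
    unfolding P_def using tree_of_par_pow[OF ia(3) ia(2), of i] tree_of_par_pow[OF jb(3) jb(2), of j] ia(1) jb(1) dv dw tree_of_rt
    by (intro exI[of _ i] exI[of _ j]) auto
  then have "P (Least P)" by (rule LeastI)
  then have "P' (Least P)" by (rule PP)
  then have "Least P' \<le> Least P" by (rule Least_le)
  then show ?thesis unfolding tdist_def P_def P'_def .
qed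

lemma tree_of_elliptic_action: "elliptic_action S f (tree_of S f D e)"
  unfolding elliptic_action_def
proof (intro conjI ballI)
  fix v s assume v: "v \<in> Vt (tree_of S f D e)" and s: "s \<in> S"
  obtain i a where ia: "v = (i, ball S D i a)" "enat i \<le> D e e" "a \<in> S" using v tree_of_Vt_iff by auto
  have av: "act (tree_of S f D e) v s = (i, ball S D i (f a s))" using tree_of_act[OF ia(3) s ia(2)] ia(1) by simp
  show "act (tree_of S f D e) v s \<in> Vt (tree_of S f D e)" using av ia(2) cl[OF ia(3) s] tree_of_Vt_iff by auto
  show "depth (tree_of S f D e) (act (tree_of S f D e) v s) = depth (tree_of S f D e) v" using tree_of_depth av ia cl[OF ia(3) s] by simp
  fix t assume t: "t \<in> S"
  have "act (tree_of S f D e) (act (tree_of S f D e) v s) t = (i, ball S D i (f (f a s) t))" using tree_of_act[OF cl[OF ia(3) s] t ia(2)] av by simp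
  moreover have "act (tree_of S f D e) v (f s t) = (i, ball S D i (f a (f s t)))" using tree_of_act[OF ia(3) cl[OF s t] ia(2)] ia(1) by simp
  ultimately show "act (tree_of S f D e) (act (tree_of S f D e) v s) t = act (tree_of S f D e) v (f s t)" using asc[OF ia(3) s t] by simp
next
  fix v w s assume "v \<in> Vt (tree_of S f D e)" "w \<in> Vt (tree_of S f D e)" "s \<in> S"
  then show "tdist (tree_of S f D e) (act (tree_of S f D e) v s) (act (tree_of S f D e) w s) \<le> tdist (tree_of S f D e) v w" by (rule tree_of_tdist)
qed

lemma tree_of_act_ray: "s \<in> S \<Longrightarrow> enat i \<le> D e e \<Longrightarrow> act (tree_of S f D e) (ray (tree_of S f D e) i) s = (i, ball S D i s)"
  using tree_of_act[OF eS] lu tree_of_simps by simp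

lemma tree_of_elliptic: "elliptic_tree S f (tree_of S f D e)"
  unfolding elliptic_tree_def
proof (intro conjI)
  show "rooted_tree (tree_of S f D e)" by (rule tree_of_rooted)
  show "uniform_tree (tree_of S f D e)" by (rule tree_of_uniform)
  show "is_max_ray (tree_of S f D e) (ray (tree_of S f D e)) (rlen (tree_of S f D e))" by (rule tree_of_max_ray)
  show "elliptic_action S f (tree_of S f D e)" by (rule tree_of_elliptic_action)
  show "Vt (tree_of S f D e) = {act (tree_of S f D e) (ray (tree_of S f D e) i) s | i s. enat i \<le> rlen (tree_of S f D e) \<and> s \<in> S}"
  proof (rule set_eqI)
    fix v
    show "v \<in> Vt (tree_of S f D e) \<longleftrightarrow> v \<in> {act (tree_of S f D e) (ray (tree_of S f D e) i) s | i s. enat i \<le> rlen (tree_of S f D e) \<and> s \<in> S}"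
    proof
      assume "v \<in> Vt (tree_of S f D e)"
      then obtain i s where isx: "v = (i, ball S D i s)" "enat i \<le> D e e" "s \<in> S" using tree_of_Vt_iff by auto
      then have "v = act (tree_of S f D e) (ray (tree_of S f D e) i) s" using tree_of_act_ray by simp
      then show "v \<in> {act (tree_of S f D e) (ray (tree_of S f D e) i) s | i s. enat i \<le> rlen (tree_of S f D e) \<and> s \<in> S}" using isx tree_of_simps by auto
    next
      assume "v \<in> {act (tree_of S f D e) (ray (tree_of S f D e) i) s | i s. enat i \<le> rlen (tree_of S f D e) \<and> s \<in> S}"
      then obtain i s where isx: "v = act (tree_of S f D e) (ray (tree_of S f D e) i) s" "enat i \<le> D e e" "s \<in> S" using tree_of_simps by auto
      then have "v = (i, ball S D i s)" using tree_of_act_ray by simp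
      then show "v \<in> Vt (tree_of S f D e)" using isx tree_of_Vt_iff by auto
    qed
  qed
qed

lemma tree_of_act_ray_eq: "s \<in> S \<Longrightarrow> s' \<in> S \<Longrightarrow> enat i \<le> D e e \<Longrightarrow>
   act (tree_of S f D e) (ray (tree_of S f D e) i) s = act (tree_of S f D e) (ray (tree_of S f D e) i) s' \<longleftrightarrow> enat i \<le> D s s'"
  using tree_of_act_ray ball_eq_iff by simp

lemma tree_of_faithful: "strongly_faithful S (tree_of S f D e)"
  unfolding strongly_faithful_def
proof (intro ballI impI)
  fix s s' assume s: "s \<in> S" and s': "s' \<in> S"
    and h: "\<forall>i. enat i \<le> rlen (tree_of S f D e) \<longrightarrow> act (tree_of S f D e) (ray (tree_of S f D e) i) s = act (tree_of S f D e) (ray (tree_of S f D e) i) s'"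
  have "\<And>i. enat i \<le> D e e \<Longrightarrow> enat i \<le> D s s'" using h tree_of_act_ray_eq[OF s s'] tree_of_simps by simp
  then have "D s s' = D e e" using enat_all_le D_le_max[OF s s'] by blast
  then show "s = s'" using lf_strict[OF slf s s' eS] by simp
qed

lemma tree_of_Dchi: "s \<in> S \<Longrightarrow> s' \<in> S \<Longrightarrow> Dchi (tree_of S f D e) s s' = D s s'"
proof -
  assume s: "s \<in> S" and s': "s' \<in> S"
  have "{enat i | i. enat i \<le> rlen (tree_of S f D e) \<and> act (tree_of S f D e) (ray (tree_of S f D e) i) s = act (tree_of S f D e) (ray (tree_of S f D e) i) s'} = {enat i | i. enat i \<le> D s s'}"
    using tree_of_act_ray_eq[OF s s'] tree_of_simps D_le_max[OF s s'] order_trans by fastforce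
  then show ?thesis unfolding Dchi_def using Sup_enat_le by simp
qed

end

theorem tree_of_realises:
  assumes "monoid_on S f e" and "strict_length_function S f D"
  shows "elliptic_tree S f (tree_of S f D e) \<and> strongly_faithful S (tree_of S f D e) \<and>
    (\<forall>s\<in>S. \<forall>s'\<in>S. Dchi (tree_of S f D e) s s' = D s s')"
proof -
  have m: "e \<in> S" "\<And>a b. a \<in> S \<Longrightarrow> b \<in> S \<Longrightarrow> f a b \<in> S"
    "\<And>a b c. a \<in> S \<Longrightarrow> b \<in> S \<Longrightarrow> c \<in> S \<Longrightarrow> f (f a b) c = f a (f b c)"
    "\<And>a. a \<in> S \<Longrightarrow> f e a = a" using assms(1) unfolding monoid_on_def by auto
  show ?thesis
    using tree_of_elliptic[OF assms(2) m] tree_of_faithful[OF assms(2) m] tree_of_Dchi[OF assms(2) m]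
    by blast
qed


lemma depth_reach:
  assumes "rooted_tree T" "v \<in> Vt T"
  shows "(par T ^^ depth T v) v = rt T"
proof -
  have "\<exists>n. (par T ^^ n) v = rt T" using assms unfolding rooted_tree_def by blast
  then show ?thesis unfolding depth_def by (rule LeastI_ex)
qed

lemma depth_le: "(par T ^^ n) v = rt T \<Longrightarrow> depth T v \<le> n"
  unfolding depth_def by (rule Least_le)

lemma depth_0:
  assumes "rooted_tree T" "v \<in> Vt T" "depth T v = 0"
  shows "v = rt T"
  using depth_reach[OF assms(1,2)] assms(3) by simp

lemma depth_rt: "depth T (rt T) = 0"
  using depth_le[where T=T and n=0 and v="rt T"] by simp

lemma depth_par:
  assumes r: "rooted_tree T" and v: "v \<in> Vt T" and nr: "v \<noteq> rt T"
  shows "depth T v \<noteq> 0 \<and> depth T (par T v) = depth T v - 1"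
proof -
  define d where "d = depth T v"
  have d0: "d \<noteq> 0" using depth_0[OF r v] nr d_def by blast
  have reach: "(par T ^^ d) v = rt T" using depth_reach[OF r v] d_def by simp
  have "(par T ^^ (d - 1)) (par T v) = rt T"
    using reach d0 by (metis Suc_diff_1 funpow_Suc_right neq0_conv o_apply)
  then have le: "depth T (par T v) \<le> d - 1" by (rule depth_le)
  have pv: "par T v \<in> Vt T" using r v nr unfolding rooted_tree_def by blast
  have "(par T ^^ Suc (depth T (par T v))) v = rt T"
    using depth_reach[OF r pv] by (simp add: funpow_Suc_right del: funpow.simps)
  then have "depth T v \<le> Suc (depth T (par T v))" by (rule depth_le)
  then have "d \<le> Suc (depth T (par T v))" using d_def by simp
  then show ?thesis using le d0 d_def by simp
qed

lemma ray_par_pow: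
  assumes r: "is_ray T \<beta> l" and ni: "n \<le> i" and il: "enat i \<le> l"
  shows "(par T ^^ n) (\<beta> i) = \<beta> (i - n)"
  using ni
proof (induction n)
  case 0 then show ?case by simp
next
  case (Suc n)
  have IH: "(par T ^^ n) (\<beta> i) = \<beta> (i - n)" using Suc by simp
  have e: "i - n = Suc (i - Suc n)" using Suc.prems by simp
  have "enat (i - n) \<le> l" by (rule order_trans[OF _ il]) simp
  then have "par T (\<beta> (Suc (i - Suc n))) = \<beta> (i - Suc n)" using r e unfolding is_ray_def by simp
  then show ?case using IH e by simp
qed

lemma ray_depth:
  assumes r: "is_ray T \<beta> l" and il: "enat i \<le> l"
  shows "depth T (\<beta> i) = i"
  unfolding depth_def
proof (rule Least_equality)
  show "(par T ^^ i) (\<beta> i) = rt T" using ray_par_pow[OF r le_refl il] r unfolding is_ray_def by simp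
  fix n assume n: "(par T ^^ n) (\<beta> i) = rt T"
  show "i \<le> n"
  proof (rule ccontr)
    assume "\<not> i \<le> n"
    then have "(par T ^^ n) (\<beta> i) = \<beta> (Suc (i - Suc n))" using ray_par_pow[OF r _ il, of n] by (simp add: Suc_diff_Suc)
    moreover have "enat (Suc (i - Suc n)) \<le> l" by (rule order_trans[OF _ il]) (use \<open>\<not> i \<le> n\<close> in simp)
    ultimately show False using n r unfolding is_ray_def by auto
  qed
qed

lemma ray_tdist_le1:
  assumes r: "is_ray T \<beta> l" and il: "enat (Suc i) \<le> l"
  shows "tdist T (\<beta> (Suc i)) (\<beta> i) \<le> 1"
proof -
  have "par T (\<beta> (Suc i)) = \<beta> i" using r il unfolding is_ray_def by simp
  moreover have "1 \<le> depth T (\<beta> (Suc i))" using ray_depth[OF r il] by simp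
  ultimately show ?thesis unfolding tdist_def
    by (intro Least_le exI[of _ 1] exI[of _ 0]) simp
qed

text \<open>In an elliptic tree every vertex is \<open>ray T i \<cdot> s\<close> at depth \<open>i\<close>, and since the action
  does not increase distances, the parent of \<open>ray T (i + 1) \<cdot> s\<close> is \<open>ray T i \<cdot> s\<close>.\<close>

context
  fixes S :: "'s set" and f :: "'s \<Rightarrow> 's \<Rightarrow> 's" and T :: "('v, 's) stree"
  assumes et: "elliptic_tree S f T"
begin

lemma et_rooted: "rooted_tree T" using et unfolding elliptic_tree_def by simp
lemma et_ray: "is_ray T (ray T) (rlen T)" using et unfolding elliptic_tree_def is_max_ray_def by simp
lemma et_ray_Vt: "enat i \<le> rlen T \<Longrightarrow> ray T i \<in> Vt T" using et_ray unfolding is_ray_def by simp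
lemma et_action: "elliptic_action S f T" using et unfolding elliptic_tree_def by simp
lemma et_act_Vt: "v \<in> Vt T \<Longrightarrow> s \<in> S \<Longrightarrow> act T v s \<in> Vt T \<and> depth T (act T v s) = depth T v"
  using et_action unfolding elliptic_action_def by blast
lemma et_act_comp: "v \<in> Vt T \<Longrightarrow> s \<in> S \<Longrightarrow> t \<in> S \<Longrightarrow> act T (act T v s) t = act T v (f s t)"
  using et_action unfolding elliptic_action_def by blast
lemma et_tdist: "v \<in> Vt T \<Longrightarrow> w \<in> Vt T \<Longrightarrow> s \<in> S \<Longrightarrow> tdist T (act T v s) (act T w s) \<le> tdist T v w"
  using et_action unfolding elliptic_action_def by blast
lemma et_Vt: "Vt T = {act T (ray T i) s | i s. enat i \<le> rlen T \<and> s \<in> S}"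
  using et unfolding elliptic_tree_def by simp
lemma et_ray_depth: "enat i \<le> rlen T \<Longrightarrow> depth T (ray T i) = i" using ray_depth[OF et_ray] .

lemma et_act_ray: "enat i \<le> rlen T \<Longrightarrow> s \<in> S \<Longrightarrow> act T (ray T i) s \<in> Vt T \<and> depth T (act T (ray T i) s) = i"
  using et_act_Vt[OF et_ray_Vt] et_ray_depth by simp

lemma et_act_ray0: "s \<in> S \<Longrightarrow> act T (ray T 0) s = rt T"
  using et_act_ray[of 0 s] depth_0[OF et_rooted] by (simp add: zero_enat_def[symmetric])

lemma et_par_act:
  assumes s: "s \<in> S" and il: "enat (Suc i) \<le> rlen T"
  shows "par T (act T (ray T (Suc i)) s) = act T (ray T i) s"
proof -
  have il': "enat i \<le> rlen T" by (rule order_trans[OF _ il]) simp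
  define u where "u = act T (ray T (Suc i)) s"
  define w where "w = act T (ray T i) s"
  have u: "u \<in> Vt T" "depth T u = Suc i" using et_act_ray[OF il s] u_def by auto
  have w: "w \<in> Vt T" "depth T w = i" using et_act_ray[OF il' s] w_def by auto
  have "tdist T u w \<le> tdist T (ray T (Suc i)) (ray T i)"
    using et_tdist[OF et_ray_Vt[OF il] et_ray_Vt[OF il'] s] u_def w_def by simp
  also have "\<dots> \<le> 1" by (rule ray_tdist_le1[OF et_ray il])
  finally have t1: "tdist T u w \<le> 1" .
  define P where "P = (\<lambda>n. \<exists>k l. k + l = n \<and> k \<le> depth T u \<and> l \<le> depth T w \<and> (par T ^^ k) u = (par T ^^ l) w)"
  have "P (depth T u + depth T w)"
    unfolding P_def using depth_reach[OF et_rooted u(1)] depth_reach[OF et_rooted w(1)]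
    by (intro exI[of _ "depth T u"] exI[of _ "depth T w"]) simp
  then have PL: "P (Least P)" by (rule LeastI)
  have t2: "Least P \<le> 1" using t1 unfolding tdist_def P_def .
  obtain k l where kl0: "k + l = Least P" "k \<le> Suc i" "l \<le> i" "(par T ^^ k) u = (par T ^^ l) w"
    using PL unfolding P_def u(2) w(2) by blast
  have kl: "k + l \<le> 1" "k \<le> Suc i" "l \<le> i" "(par T ^^ k) u = (par T ^^ l) w"
    using kl0 t2 by auto
  consider "k = 0 \<and> l = 0" | "k = 0 \<and> l = 1" | "k = 1 \<and> l = 0" using kl(1) by linarith
  then show ?thesis
  proof cases
    case 1 then have "u = w" using kl(4) by simp
    then show ?thesis using u(2) w(2) by simp
  next
    case 2
    then have uw: "u = par T w" using kl(4) by simp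
    have "i \<noteq> 0" using 2 kl(3) by simp
    then have "w \<noteq> rt T" using w(2) depth_rt by metis
    then have "depth T (par T w) = i - 1" using depth_par[OF et_rooted w(1)] w(2) by simp
    then show ?thesis using uw u(2) by simp
  next
    case 3
    then have "par T u = w" using kl(4) by simp
    then show ?thesis using u_def w_def by simp
  qed
qed

lemma et_down:
  assumes s: "s \<in> S" and s': "s' \<in> S" and il: "enat (j + d) \<le> rlen T"
    and eq: "act T (ray T (j + d)) s = act T (ray T (j + d)) s'"
  shows "act T (ray T j) s = act T (ray T j) s'"
  using il eq
proof (induction d)
  case 0 then show ?case by simp
next
  case (Suc d)
  have il2: "enat (Suc (j + d)) \<le> rlen T" using Suc.prems by simp
  have "enat (j + d) \<le> rlen T" by (rule order_trans[OF _ il2]) simp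
  moreover have "act T (ray T (j + d)) s = act T (ray T (j + d)) s'"
    using et_par_act[OF s il2] et_par_act[OF s' il2] Suc.prems(2) by simp
  ultimately show ?case using Suc.IH by simp
qed


lemma et_act_unit:
  assumes eS: "e \<in> S" and ru: "\<And>a. a \<in> S \<Longrightarrow> f a e = a" and il: "enat i \<le> rlen T"
  shows "act T (ray T i) e = ray T i"
proof -
  have "ray T i \<in> Vt T" by (rule et_ray_Vt[OF il])
  then obtain j s0 where js: "ray T i = act T (ray T j) s0" "enat j \<le> rlen T" "s0 \<in> S"
    using et_Vt by auto
  have "act T (ray T i) e = act T (act T (ray T j) s0) e" by (subst js(1)) (rule refl)
  also have "\<dots> = act T (ray T j) (f s0 e)" by (rule et_act_comp[OF et_ray_Vt[OF js(2)] js(3) eS])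
  also have "\<dots> = act T (ray T j) s0" by (simp only: ru[OF js(3)])
  also have "\<dots> = ray T i" by (rule js(1)[symmetric])
  finally show ?thesis .
qed

lemma et_repr: "v \<in> Vt T \<Longrightarrow> \<exists>s. s \<in> S \<and> v = act T (ray T (depth T v)) s \<and> enat (depth T v) \<le> rlen T"
proof -
  assume "v \<in> Vt T"
  then obtain j s where js: "v = act T (ray T j) s" "enat j \<le> rlen T" "s \<in> S"
    using et_Vt by auto
  then have "depth T v = j" using et_act_ray by simp
  then show ?thesis using js by auto
qed


end


context
  fixes S :: "'s set" and f :: "'s \<Rightarrow> 's \<Rightarrow> 's" and D :: "'s \<Rightarrow> 's \<Rightarrow> enat"
    and T :: "('v, 's) stree"
  assumes et: "elliptic_tree S f T"
    and dc: "\<forall>s\<in>S. \<forall>s'\<in>S. Dchi T s s' = D s s'"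
begin

lemma et_rlen:
  assumes "e \<in> S"
  shows "rlen T = D e e"
proof -
  have "Dchi T e e = rlen T" unfolding Dchi_def using Sup_enat_le[of "rlen T"] by simp
  then show ?thesis using dc assms by simp
qed

lemma et_act_ray_eq:
  assumes s: "s \<in> S" and s': "s' \<in> S" and il: "enat i \<le> rlen T"
  shows "act T (ray T i) s = act T (ray T i) s' \<longleftrightarrow> enat i \<le> D s s'"
proof
  define A where "A = {enat j | j. enat j \<le> rlen T \<and> act T (ray T j) s = act T (ray T j) s'}"
  have DA: "D s s' = Sup A" using dc s s' unfolding Dchi_def A_def by simp
  {
    assume "act T (ray T i) s = act T (ray T i) s'"
    then have "enat i \<in> A" using A_def il by auto
    then show "enat i \<le> D s s'" using DA by (simp add: Sup_upper)
  }
  {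
    assume le: "enat i \<le> D s s'"
    show "act T (ray T i) s = act T (ray T i) s'"
    proof (rule ccontr)
      assume ne: "act T (ray T i) s \<noteq> act T (ray T i) s'"
      have i0: "i \<noteq> 0"
      proof
        assume "i = 0"
        then show False using ne et_act_ray0[OF et s] et_act_ray0[OF et s'] by simp
      qed
      have "y \<le> enat (i - 1)" if y: "y \<in> A" for y
      proof -
        obtain j where j: "y = enat j" "enat j \<le> rlen T" "act T (ray T j) s = act T (ray T j) s'"
          using y A_def by auto
        have "j < i"
        proof (rule ccontr)
          assume "\<not> j < i"
          then have "j = i + (j - i)" by simp
          then have "act T (ray T (i + (j - i))) s = act T (ray T (i + (j - i))) s'"
            "enat (i + (j - i)) \<le> rlen T" using j by simp_all
          then show False using et_down[OF et s s'] ne by blast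
        qed
        then show ?thesis using j(1) by simp
      qed
      then have "Sup A \<le> enat (i - 1)" by (rule Sup_least)
      then have "enat i \<le> enat (i - 1)" using le DA by (metis order_trans)
      then show False using i0 by simp
    qed
  }
qed

lemma et_act_ray_eq_iff:
  assumes "enat i \<le> rlen T" "enat j \<le> rlen T" "s \<in> S" "t \<in> S"
  shows "act T (ray T i) s = act T (ray T j) t \<longleftrightarrow> i = j \<and> enat i \<le> D s t"
  using et_act_ray[OF et assms(1,3)] et_act_ray[OF et assms(2,4)] et_act_ray_eq[OF assms(3,4,1)]
  by metis

end

text \<open>Two elliptic trees realising the same length function are isomorphic: the map sending
  \<open>ray T\<^sub>1 i \<cdot> s\<close> to \<open>ray T\<^sub>2 i \<cdot> s\<close> is well defined and bijective, and it
  respects root, parent map, ray and action.\<close>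

lemma tree_correspondence:
  assumes e1: "elliptic_tree S f (T1 :: ('v, 's) stree)" and e2: "elliptic_tree S f (T2 :: ('w, 's) stree)"
    and d1: "\<forall>s\<in>S. \<forall>s'\<in>S. Dchi T1 s s' = D s s'"
    and d2: "\<forall>s\<in>S. \<forall>s'\<in>S. Dchi T2 s s' = D s s'"
    and rl: "rlen T1 = rlen T2"
  obtains g where "\<And>i s. enat i \<le> rlen T1 \<Longrightarrow> s \<in> S \<Longrightarrow> g (act T1 (ray T1 i) s) = act T2 (ray T2 i) s"
    and "bij_betw g (Vt T1) (Vt T2)"
proof -
  note eq1 = et_act_ray_eq_iff[OF e1 d1] and eq2 = et_act_ray_eq_iff[OF e2 d2]
  define g where "g v = act T2 (ray T2 (depth T1 v)) (SOME s. s \<in> S \<and> v = act T1 (ray T1 (depth T1 v)) s)"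
    for v
  have G: "g (act T1 (ray T1 i) s) = act T2 (ray T2 i) s" if il: "enat i \<le> rlen T1" and s: "s \<in> S" for i s
  proof -
    define v where "v = act T1 (ray T1 i) s"
    have dv: "depth T1 v = i" using et_act_ray[OF e1 il s] v_def by simp
    define s' where "s' = (SOME s'. s' \<in> S \<and> v = act T1 (ray T1 i) s')"
    have "s' \<in> S \<and> v = act T1 (ray T1 i) s'"
      unfolding s'_def by (rule someI[of _ s]) (use s v_def in simp)
    then have s': "s' \<in> S" "v = act T1 (ray T1 i) s'" by auto
    then have "act T2 (ray T2 i) s' = act T2 (ray T2 i) s" using eq1[OF il il s'(1) s] eq2 il rl s s'(1) v_def by auto
    then show ?thesis using dv s'_def v_def g_def by simp
  qed
  have V: "Vt T1 = {act T1 (ray T1 i) s | i s. enat i \<le> rlen T1 \<and> s \<in> S}"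
    "Vt T2 = {act T2 (ray T2 i) s | i s. enat i \<le> rlen T1 \<and> s \<in> S}"
    using et_Vt[OF e1] et_Vt[OF e2] rl by auto
  have "inj_on g (Vt T1)"
  proof (rule inj_onI)
    fix v w assume "v \<in> Vt T1" "w \<in> Vt T1" "g v = g w"
    then obtain i s j t where "v = act T1 (ray T1 i) s" "w = act T1 (ray T1 j) t"
      "enat i \<le> rlen T1" "enat j \<le> rlen T1" "s \<in> S" "t \<in> S" "g v = g w"
      using V(1) by auto
    then show "v = w" using G eq1 eq2 rl by metis
  qed
  moreover have "g ` Vt T1 = Vt T2"
  proof
    show "g ` Vt T1 \<subseteq> Vt T2" using G V by auto
    show "Vt T2 \<subseteq> g ` Vt T1"
    proof
      fix w assume "w \<in> Vt T2"
      then obtain i s where "w = act T2 (ray T2 i) s" "enat i \<le> rlen T1" "s \<in> S" using V(2) by auto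
      then show "w \<in> g ` Vt T1" using G[of i s] V(1) by (auto intro!: image_eqI[of _ g "act T1 (ray T1 i) s"])
    qed
  qed
  ultimately show ?thesis using that G unfolding bij_betw_def by blast
qed

theorem tree_iso:
  assumes mon: "monoid_on S f e" and e1: "elliptic_tree S f (T1 :: ('v, 's) stree)"
    and e2: "elliptic_tree S f (T2 :: ('w, 's) stree)"
    and d1: "\<forall>s\<in>S. \<forall>s'\<in>S. Dchi T1 s s' = D s s'"
    and d2: "\<forall>s\<in>S. \<forall>s'\<in>S. Dchi T2 s s' = D s s'"
  shows "stree_iso S T1 T2"
proof -
  have eS: "e \<in> S" and cl: "\<And>a b. a \<in> S \<Longrightarrow> b \<in> S \<Longrightarrow> f a b \<in> S"
    and ru: "\<And>a. a \<in> S \<Longrightarrow> f a e = a" using mon unfolding monoid_on_def by auto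
  have rl: "rlen T1 = rlen T2" using et_rlen[OF e1 d1 eS] et_rlen[OF e2 d2 eS] by simp
  obtain g where G: "\<And>i s. enat i \<le> rlen T1 \<Longrightarrow> s \<in> S \<Longrightarrow> g (act T1 (ray T1 i) s) = act T2 (ray T2 i) s"
    and bij: "bij_betw g (Vt T1) (Vt T2)" using tree_correspondence[OF e1 e2 d1 d2 rl] by blast
  show ?thesis
    unfolding stree_iso_def
  proof (intro exI[of _ g] conjI ballI allI impI)
    show "g (rt T1) = rt T2"
      using G[OF _ eS, of 0] et_act_ray0[OF e1 eS] et_act_ray0[OF e2 eS] by (simp add: zero_enat_def[symmetric])
    fix i assume il: "enat i \<le> rlen T1"
    show "g (ray T1 i) = ray T2 i"
      using G[OF il eS] et_act_unit[OF e1 eS ru il] et_act_unit[OF e2 eS ru] il rl by simp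
  next
    fix v assume v: "v \<in> Vt T1" and nr: "v \<noteq> rt T1"
    obtain s where s: "s \<in> S" "v = act T1 (ray T1 (depth T1 v)) s" "enat (depth T1 v) \<le> rlen T1"
      using et_repr[OF e1 v] by blast
    obtain j where j: "depth T1 v = Suc j" using depth_par[OF et_rooted[OF e1] v nr] not0_implies_Suc by blast
    have jl: "enat j \<le> rlen T1" by (rule order_trans[OF _ s(3)]) (simp add: j)
    have "g (par T1 v) = act T2 (ray T2 j) s" using et_par_act[OF e1 s(1)] G[OF jl s(1)] s(2,3) j by simp
    also have "\<dots> = par T2 (g v)" using et_par_act[OF e2 s(1)] G[OF s(3,1)] s(2,3) j rl by simp
    finally show "g (par T1 v) = par T2 (g v)" .
  next
    fix v t assume v: "v \<in> Vt T1" and t: "t \<in> S"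
    obtain s where s: "s \<in> S" "v = act T1 (ray T1 (depth T1 v)) s" "enat (depth T1 v) \<le> rlen T1"
      using et_repr[OF e1 v] by blast
    have "g (act T1 v t) = act T2 (ray T2 (depth T1 v)) (f s t)"
      using et_act_comp[OF e1 et_ray_Vt[OF e1 s(3)] s(1) t] G[OF s(3) cl[OF s(1) t]] s(2) by simp
    also have "\<dots> = act T2 (g v) t"
      using et_act_comp[OF e2 et_ray_Vt[OF e2] s(1) t] G[OF s(3,1)] s(2,3) rl by simp
    finally show "g (act T1 v t) = act T2 (g v) t" .
  qed (use bij rl in simp_all)
qed


lemma RhY_rhodes: "x \<in> RhY \<phi> \<Longrightarrow> x \<in> rhodes"
proof (induction rule: RhY.induct)
  case unit then show ?case by (rule rh_unit)
next
  case (gen y)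
  have "ltL (Some (\<phi> y)) None" unfolding ltL_def using leL_top leL_None by blast
  then show ?case unfolding rhodes_def by simp
next
  case (mult \<sigma> \<tau>) then show ?case using rh_mult_closed by blast
qed

lemma RhY_monoid: "monoid_on (RhY \<phi>) rh_mult [None]"
  unfolding monoid_on_def
  by (intro conjI ballI RhY.unit RhY.mult)
    (simp_all add: RhY_rhodes rh_assoc rh_left_unit rh_right_unit)

lemma strict_length_function_subset:
  "S' \<subseteq> S \<Longrightarrow> strict_length_function S f D \<Longrightarrow> strict_length_function S' f D"
  unfolding strict_length_function_def length_function_def by blast

theorem lemma8p7:
  assumes "J_above_finite TYPE('a::semigroup_mult)"
  shows "strict_length_function (rhodes :: 'a option list set) rh_mult Hfun \<and>
    (\<forall>\<phi> :: 'y \<Rightarrow> 'a. Y_semigroup \<phi> \<longrightarrow>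
       strict_length_function (RhY \<phi>) rh_mult Hfun \<and>
       (\<exists>T :: (nat \<times> 'a option list set, 'a option list) stree.
          elliptic_tree (RhY \<phi>) rh_mult T \<and> strongly_faithful (RhY \<phi>) T \<and>
          (\<forall>s\<in>RhY \<phi>. \<forall>s'\<in>RhY \<phi>. Dchi T s s' = Hfun s s')) \<and>
       (\<forall>(T1 :: ('v, 'a option list) stree) (T2 :: ('w, 'a option list) stree).
          elliptic_tree (RhY \<phi>) rh_mult T1 \<and> strongly_faithful (RhY \<phi>) T1 \<and>
          (\<forall>s\<in>RhY \<phi>. \<forall>s'\<in>RhY \<phi>. Dchi T1 s s' = Hfun s s') \<and>
          elliptic_tree (RhY \<phi>) rh_mult T2 \<and> strongly_faithful (RhY \<phi>) T2 \<and>
          (\<forall>s\<in>RhY \<phi>. \<forall>s'\<in>RhY \<phi>. Dchi T2 s s' = Hfun s s') \<longrightarrow>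
          stree_iso (RhY \<phi>) T1 T2))"
proof -
  have H: "strict_length_function (rhodes :: 'a option list set) rh_mult Hfun"
    by (rule Hfun_strict_length_function[OF assms])
  have HY: "strict_length_function (RhY \<phi>) rh_mult Hfun" for \<phi> :: "'y \<Rightarrow> 'a"
    using strict_length_function_subset[OF _ H] RhY_rhodes by blast
  show ?thesis
  proof (intro conjI allI impI)
    fix \<phi> :: "'y \<Rightarrow> 'a"
    show "\<exists>T :: (nat \<times> 'a option list set, 'a option list) stree.
          elliptic_tree (RhY \<phi>) rh_mult T \<and> strongly_faithful (RhY \<phi>) T \<and>
          (\<forall>s\<in>RhY \<phi>. \<forall>s'\<in>RhY \<phi>. Dchi T s s' = Hfun s s')"
      using tree_of_realises[OF RhY_monoid HY] by (rule exI)
  qed (use H HY tree_iso[OF RhY_monoid] in auto)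
qed

end
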